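(* Let $p\in A^m$, $A=\mathbb C[t_1,\dots,t_n]$, with $p\neq0$, and let $R$ be a matrix over $\mathcal W_n$ whose rows generate $\ker(\kappa_p)$. Then the VMPUM $\{g\in C^\infty(\mathbb R^n,\mathbb C)^m: R\bullet g=0\}$ of $\{p\}$ equals $\{c\,p: c\in\mathbb C\}$; in particular it is a one-dimensional $\mathbb C$-vector space.
   Context: $\mathcal W_n$ is the $n$-th Weyl algebra $\mathbb C[t_1,\dots,t_n]\langle\partial_1,\dots,\partial_n\rangle$ with $\partial_it_j=t_j\partial_i+\delta_{ij}$, acting on $C^\infty(\mathbb R^n,\mathbb C)$ (which contains the polynomial functions $A$) by $\partial_i\bullet f=\partial f/\partial t_i$ and multiplication by $t_i$. For a matrix $R\in\mathcal W_n^{r\times m}$, $(R\bullet g)_i=\sum_jR_{ij}\bullet g_j$. For $p\in A^m$, $\ker(\kappa_p)=\{a\in\mathcal W_n^{1\times m}:\sum_ia_i\bullet p_i=0\}$. *)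

theory Defs
  imports "HOL-Analysis.Analysis"
begin

text \<open>An element of the Weyl algebra W_n is represented by its
(finitely supported) coefficient function in the normally ordered basis
t^alpha d^beta (coordinates first, derivatives to the right).\<close>

type_synonym 'n weyl = "('n \<Rightarrow> nat) \<times> ('n \<Rightarrow> nat) \<Rightarrow> complex"

definition weyl_elem :: "'n weyl \<Rightarrow> bool" where
  "weyl_elem a \<longleftrightarrow> finite {z. a z \<noteq> 0}"

text \<open>Normal ordering: d^beta t^gamma = sum over kappa of
  prod_i C(beta_i,kappa_i) C(gamma_i,kappa_i) kappa_i! t^(gamma-kappa) d^(beta-kappa).\<close>

definition weyl_coef :: "('n::finite \<Rightarrow> nat) \<Rightarrow> ('n \<Rightarrow> nat) \<Rightarrow> ('n \<Rightarrow> nat) \<Rightarrow> complex" where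
  "weyl_coef \<beta> \<gamma> \<kappa> = (\<Prod>i\<in>UNIV. of_nat ((\<beta> i choose \<kappa> i) * (\<gamma> i choose \<kappa> i) * fact (\<kappa> i)))"

definition weyl_mult :: "'n::finite weyl \<Rightarrow> 'n weyl \<Rightarrow> 'n weyl" where
  "weyl_mult a b = (\<lambda>(\<mu>, \<nu>).
     \<Sum>(\<alpha>, \<beta>, \<gamma>, \<delta>, \<kappa>) \<in> {(\<alpha>, \<beta>, \<gamma>, \<delta>, \<kappa>). a (\<alpha>, \<beta>) \<noteq> 0 \<and> b (\<gamma>, \<delta>) \<noteq> 0 \<and>
         (\<forall>i. \<kappa> i \<le> \<beta> i \<and> \<kappa> i \<le> \<gamma> i) \<and>
         \<mu> = (\<lambda>i. \<alpha> i + \<gamma> i - \<kappa> i) \<and> \<nu> = (\<lambda>i. \<beta> i + \<delta> i - \<kappa> i)}.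
       a (\<alpha>, \<beta>) * b (\<gamma>, \<delta>) * weyl_coef \<beta> \<gamma> \<kappa>)"

definition pdiff :: "'n::finite \<Rightarrow> ((real, 'n) vec \<Rightarrow> complex) \<Rightarrow> ((real, 'n) vec \<Rightarrow> complex)" where
  "pdiff i g = (\<lambda>x. vector_derivative (\<lambda>s::real. g (x + s *\<^sub>R axis i 1)) (at 0))"

definition pdiffs :: "'n::finite list \<Rightarrow> ((real, 'n) vec \<Rightarrow> complex) \<Rightarrow> ((real, 'n) vec \<Rightarrow> complex)" where
  "pdiffs is g = foldr pdiff is g"

definition smooth_fun :: "(real^('n::finite) \<Rightarrow> complex) \<Rightarrow> bool" where
  "smooth_fun g \<longleftrightarrow> (\<forall>is. continuous_on UNIV (pdiffs is g) \<and>
      (\<forall>i x. (\<lambda>s::real. pdiffs is g (x + s *\<^sub>R axis i 1)) differentiable (at 0)))"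

definition pdiff_multi :: "('n::{finite,linorder} \<Rightarrow> nat) \<Rightarrow> ((real, 'n) vec \<Rightarrow> complex) \<Rightarrow> ((real, 'n) vec \<Rightarrow> complex)" where
  "pdiff_multi \<beta> g = pdiffs (concat (map (\<lambda>i. replicate (\<beta> i) i) (sorted_list_of_set (UNIV::'n::{finite,linorder} set)))) g"

definition monom :: "('n::finite \<Rightarrow> nat) \<Rightarrow> (real, 'n) vec \<Rightarrow> complex" where
  "monom \<alpha> x = (\<Prod>i\<in>UNIV. complex_of_real (x $ i) ^ \<alpha> i)"

definition weyl_act :: "'n::{finite,linorder} weyl \<Rightarrow> ((real, 'n) vec \<Rightarrow> complex) \<Rightarrow> ((real, 'n) vec \<Rightarrow> complex)" where
  "weyl_act a g = (\<lambda>x. \<Sum>(\<alpha>, \<beta>) \<in> {z. a z \<noteq> 0}. a (\<alpha>, \<beta>) * monom \<alpha> x * pdiff_multi \<beta> g x)"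

definition poly_fun :: "(real^('n::finite) \<Rightarrow> complex) \<Rightarrow> bool" where
  "poly_fun f \<longleftrightarrow> (\<exists>c :: ('n \<Rightarrow> nat) \<Rightarrow> complex. finite {\<alpha>. c \<alpha> \<noteq> 0} \<and>
      f = (\<lambda>x. \<Sum>\<alpha>\<in>{\<alpha>. c \<alpha> \<noteq> 0}. c \<alpha> * monom \<alpha> x))"

definition ker_kappa :: "('m::finite \<Rightarrow> (real, 'n::{finite,linorder}) vec \<Rightarrow> complex) \<Rightarrow> ('m \<Rightarrow> 'n weyl) set" where
  "ker_kappa p = {a. (\<forall>j. weyl_elem (a j)) \<and> (\<lambda>x. \<Sum>j\<in>UNIV. weyl_act (a j) (p j) x) = (\<lambda>x. 0)}"

definition rows_generate :: "('r::finite \<Rightarrow> 'm::finite \<Rightarrow> 'n::{finite,linorder} weyl) \<Rightarrow> ('m \<Rightarrow> 'n weyl) set \<Rightarrow> bool" where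
  "rows_generate R M \<longleftrightarrow> (\<forall>k j. weyl_elem (R k j)) \<and>
     M = {a. \<exists>b :: 'r \<Rightarrow> 'n weyl. (\<forall>k. weyl_elem (b k)) \<and>
                a = (\<lambda>j z. \<Sum>k\<in>UNIV. weyl_mult (b k) (R k j) z)}"

end

theory Submission
  imports Defs
begin

(* The proof follows the paper.  Let g be a smooth solution of R g = 0.

   (1) Every operator vector a in the left module generated by the rows of R
       also annihilates g.  This needs the action of the Weyl algebra to be a
       module action, act (b * r) g = act b (act r g), which in turn rests on
       the Leibniz rule for d^beta (t^gamma h) and on the symmetry of second
       partial derivatives (so that d^beta does not depend on the order of
       differentiation).
   (2) Choose j0 with p_j0 <> 0 and a monomial t^alpha0 of maximal total
       degree in p_j0; then d^alpha0 p_j0 is a nonzero constant L.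
   (3) The operator vectors  d_i d^alpha0 e_j0  and  (p_j / L) d^alpha0 e_j0 - e_j
       lie in ker(kappa_p).  By (1) they annihilate g, so d^alpha0 g_j0 has
       zero gradient, hence is a constant C, and g_j = (C / L) p_j.
   Conversely every multiple of p is a solution, as the rows of R lie in
   ker(kappa_p). *)

section \<open>Calculus of smooth functions\<close>

text \<open>Differentiability along every coordinate line, the regularity under
  which the rules for the partial derivative pdiff hold.\<close>

definition linediff :: "(real^'n::finite \<Rightarrow> complex) \<Rightarrow> bool" where
  "linediff f \<longleftrightarrow> (\<forall>i x. (\<lambda>s::real. f (x + s *\<^sub>R axis i 1)) differentiable (at 0))"

lemma smooth_funD: "smooth_fun g \<Longrightarrow> continuous_on UNIV (pdiffs is g) \<and> linediff (pdiffs is g)"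
  unfolding smooth_fun_def linediff_def by blast

lemma smooth_funI:
  "(\<And>is. continuous_on UNIV (pdiffs is g) \<and> linediff (pdiffs is g)) \<Longrightarrow> smooth_fun g"
  unfolding smooth_fun_def linediff_def by blast

lemma pdiffs_Nil [simp]: "pdiffs [] g = g"
  by (simp add: pdiffs_def)

lemma pdiffs_Cons [simp]: "pdiffs (i # is) g = pdiff i (pdiffs is g)"
  by (simp add: pdiffs_def)

lemma pdiffs_append: "pdiffs (xs @ ys) g = pdiffs xs (pdiffs ys g)"
  by (simp add: pdiffs_def)

lemma smooth_linediff: "smooth_fun g \<Longrightarrow> linediff g"
  using smooth_funD[of g "[]"] by simp

lemma smooth_cont: "smooth_fun g \<Longrightarrow> continuous_on UNIV g"
  using smooth_funD[of g "[]"] by simp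

lemma smooth_pdiff: "smooth_fun g \<Longrightarrow> smooth_fun (pdiff i g)"
  using smooth_funD[of g "_ @ [i]"] by (intro smooth_funI) (simp add: pdiffs_append)

lemma smooth_pdiffs: "smooth_fun g \<Longrightarrow> smooth_fun (pdiffs is g)"
  by (induction "is") (auto intro: smooth_pdiff)

lemma linediff_const: "linediff (\<lambda>x. c)"
  unfolding linediff_def by simp

lemma linediff_add: "linediff f \<Longrightarrow> linediff g \<Longrightarrow> linediff (\<lambda>x. f x + g x)"
  unfolding linediff_def by simp

lemma linediff_mult: "linediff f \<Longrightarrow> linediff g \<Longrightarrow> linediff (\<lambda>x. f x * g x)"
  unfolding linediff_def by simp

lemma linediff_cmult: "linediff f \<Longrightarrow> linediff (\<lambda>x. c * f x)"
  using linediff_mult[OF linediff_const] by blast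

lemma linediff_sum:
  "finite S \<Longrightarrow> (\<And>k. k \<in> S \<Longrightarrow> linediff (f k)) \<Longrightarrow> linediff (\<lambda>x. \<Sum>k\<in>S. f k x)"
  by (induction S rule: finite_induct) (auto intro: linediff_add linediff_const)

lemma pdiff_const: "pdiff i (\<lambda>x. c) = (\<lambda>x. 0)"
  unfolding pdiff_def by simp

lemma pdiff_add:
  "linediff f \<Longrightarrow> linediff g \<Longrightarrow> pdiff i (\<lambda>x. f x + g x) = (\<lambda>x. pdiff i f x + pdiff i g x)"
  unfolding linediff_def pdiff_def by (simp add: vector_derivative_add_at)

lemma pdiff_mult: "linediff f \<Longrightarrow> linediff g \<Longrightarrow>
   pdiff i (\<lambda>x. f x * g x) = (\<lambda>x. f x * pdiff i g x + pdiff i f x * g x)"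
  unfolding linediff_def pdiff_def by (simp add: vector_derivative_mult_at)

lemma pdiff_cmult: "linediff f \<Longrightarrow> pdiff i (\<lambda>x. c * f x) = (\<lambda>x. c * pdiff i f x)"
  using pdiff_mult[of "\<lambda>x. c" f i] by (simp add: linediff_const pdiff_const)

lemma pdiff_sum: "finite S \<Longrightarrow> (\<And>k. k \<in> S \<Longrightarrow> linediff (f k)) \<Longrightarrow>
   pdiff i (\<lambda>x. \<Sum>k\<in>S. f k x) = (\<lambda>x. \<Sum>k\<in>S. pdiff i (f k) x)"
proof (induction S rule: finite_induct)
  case (insert a S)
  then have "pdiff i (\<lambda>x. f a x + (\<Sum>k\<in>S. f k x)) =
      (\<lambda>x. pdiff i (f a) x + pdiff i (\<lambda>x. \<Sum>k\<in>S. f k x) x)"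
    by (intro pdiff_add linediff_sum) auto
  with insert show ?case by simp
qed (simp add: pdiff_const)

lemma pdiffs_add:
  assumes "\<And>L. length L < length is \<Longrightarrow> linediff (pdiffs L f) \<and> linediff (pdiffs L g)"
  shows "pdiffs is (\<lambda>x. f x + g x) = (\<lambda>x. pdiffs is f x + pdiffs is g x)"
  using assms by (induction "is") (auto simp: pdiff_add)

lemma pdiffs_cmult:
  assumes "\<And>L. length L < length is \<Longrightarrow> linediff (pdiffs L f)"
  shows "pdiffs is (\<lambda>x. c * f x) = (\<lambda>x. c * pdiffs is f x)"
  using assms by (induction "is") (auto simp: pdiff_cmult)

lemma pdiffs_const: "pdiffs is (\<lambda>x. c) = (\<lambda>x. if is = [] then c else 0)"
  by (induction "is") (auto simp: pdiff_const)

lemma smooth_const: "smooth_fun (\<lambda>x. c)"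
  by (rule smooth_funI) (simp add: pdiffs_const linediff_const)

lemma smooth_add:
  assumes f: "smooth_fun f" and g: "smooth_fun g"
  shows "smooth_fun (\<lambda>x. f x + g x)"
proof (rule smooth_funI)
  fix "is"
  have "pdiffs is (\<lambda>x. f x + g x) = (\<lambda>x. pdiffs is f x + pdiffs is g x)"
    by (rule pdiffs_add) (simp add: smooth_funD[OF f] smooth_funD[OF g])
  then show "continuous_on UNIV (pdiffs is (\<lambda>x. f x + g x)) \<and> linediff (pdiffs is (\<lambda>x. f x + g x))"
    using smooth_funD[OF f, of "is"] smooth_funD[OF g, of "is"]
    by (simp add: continuous_on_add linediff_add)
qed

lemma smooth_cmult:
  assumes f: "smooth_fun f"
  shows "smooth_fun (\<lambda>x. c * f x)"
proof (rule smooth_funI)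
  fix "is"
  have "pdiffs is (\<lambda>x. c * f x) = (\<lambda>x. c * pdiffs is f x)"
    by (rule pdiffs_cmult) (simp add: smooth_funD[OF f])
  then show "continuous_on UNIV (pdiffs is (\<lambda>x. c * f x)) \<and> linediff (pdiffs is (\<lambda>x. c * f x))"
    using smooth_funD[OF f, of "is"] by (simp add: continuous_on_mult_left linediff_cmult)
qed

lemma smooth_sum:
  "finite S \<Longrightarrow> (\<And>k. k \<in> S \<Longrightarrow> smooth_fun (f k)) \<Longrightarrow> smooth_fun (\<lambda>x. \<Sum>k\<in>S. f k x)"
  by (induction S rule: finite_induct) (auto intro: smooth_add smooth_const)

text \<open>The last derivative taken splits the product into two products of smooth
  functions, to which the induction hypothesis applies.\<close>

lemma regular_pdiffs_mult:
  "\<forall>f g. smooth_fun f \<longrightarrow> smooth_fun g \<longrightarrow> (\<forall>L. length L \<le> n \<longrightarrow>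
     continuous_on UNIV (pdiffs L (\<lambda>x. f x * g x)) \<and> linediff (pdiffs L (\<lambda>x. f x * g x)))"
proof (induction n)
  case 0
  show ?case
    by (auto simp: smooth_cont smooth_linediff continuous_on_mult linediff_mult)
next
  case (Suc n)
  show ?case
  proof (intro allI impI)
    fix f g :: "real^'a \<Rightarrow> complex" and L :: "'a list"
    assume f: "smooth_fun f" and g: "smooth_fun g" and len: "length L \<le> Suc n"
    show "continuous_on UNIV (pdiffs L (\<lambda>x. f x * g x)) \<and> linediff (pdiffs L (\<lambda>x. f x * g x))"
    proof (cases "length L \<le> n")
      case True
      then show ?thesis using Suc.IH f g by blast
    next
      case False
      then obtain js i where L: "L = js @ [i]" and js: "length js = n"
        using len by (cases L rule: rev_cases) auto
      have f': "smooth_fun (pdiff i f)" and g': "smooth_fun (pdiff i g)"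
        using f g by (simp_all add: smooth_pdiff)
      have "pdiffs L (\<lambda>x. f x * g x) = pdiffs js (\<lambda>x. f x * pdiff i g x + pdiff i f x * g x)"
        unfolding L pdiffs_append by (simp add: pdiff_mult f g smooth_linediff)
      also have "\<dots> = (\<lambda>x. pdiffs js (\<lambda>x. f x * pdiff i g x) x + pdiffs js (\<lambda>x. pdiff i f x * g x) x)"
        using Suc.IH f g f' g' js by (intro pdiffs_add) auto
      finally show ?thesis
        using Suc.IH f g f' g' js by (simp add: continuous_on_add linediff_add)
    qed
  qed
qed

lemma smooth_mult: "smooth_fun f \<Longrightarrow> smooth_fun g \<Longrightarrow> smooth_fun (\<lambda>x. f x * g x)"
  using regular_pdiffs_mult by (blast intro: smooth_funI)

lemma smooth_prod:
  "finite S \<Longrightarrow> (\<And>k. k \<in> S \<Longrightarrow> smooth_fun (f k)) \<Longrightarrow> smooth_fun (\<lambda>x. \<Prod>k\<in>S. f k x)"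
  by (induction S rule: finite_induct) (auto intro: smooth_mult smooth_const)

lemma smooth_power: "smooth_fun f \<Longrightarrow> smooth_fun (\<lambda>x. f x ^ k)"
  by (induction k) (auto intro: smooth_mult smooth_const)

lemma line_nth: "(x + s *\<^sub>R axis i 1)$j = x$j + (if j = i then s else 0)"
  by (simp add: axis_def)

lemma coord_line_deriv:
  "((\<lambda>s. complex_of_real ((x + s *\<^sub>R axis i 1)$j)) has_vector_derivative (if j = i then 1 else 0)) (at t)"
proof -
  have "((\<lambda>s. complex_of_real (x$j + (if j = i then s else 0))) has_vector_derivative
        complex_of_real (if j = i then 1 else 0)) (at t)"
    by (rule has_vector_derivative_of_real) (auto intro!: derivative_eq_intros)
  then show ?thesis by (cases "j = i") (simp_all only: line_nth, auto)
qed

lemma pdiff_coord: "pdiff i (\<lambda>x. complex_of_real (x$j)) = (\<lambda>x. if j = i then 1 else 0)"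
  unfolding pdiff_def using coord_line_deriv vector_derivative_at by blast

lemma linediff_coord: "linediff (\<lambda>x. complex_of_real (x$j))"
  unfolding linediff_def using coord_line_deriv differentiableI_vector by blast

lemma pdiffs_coord:
  "pdiffs is (\<lambda>x. complex_of_real (x$j)) = (\<lambda>x. complex_of_real (x$j)) \<or>
   (\<exists>c. pdiffs is (\<lambda>x. complex_of_real (x$j)) = (\<lambda>x. c))"
proof (induction "is")
  case (Cons i "is")
  then show ?case
    by (elim disjE exE) (auto simp: pdiff_coord pdiff_const)
qed simp

lemma smooth_coord: "smooth_fun (\<lambda>x. complex_of_real (x$j))"
proof (rule smooth_funI)
  fix "is" :: "'a list"
  from pdiffs_coord[of "is" j]
  show "continuous_on UNIV (pdiffs is (\<lambda>x. complex_of_real (x $ j))) \<and>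
        linediff (pdiffs is (\<lambda>x. complex_of_real (x $ j)))"
    by (elim disjE exE) (auto intro!: continuous_intros simp: linediff_coord linediff_const)
qed

lemma smooth_monom: "smooth_fun (monom \<alpha>)"
  unfolding monom_def by (simp add: smooth_prod smooth_power smooth_coord)

lemma smooth_monom_mult: "smooth_fun h \<Longrightarrow> smooth_fun (\<lambda>x. monom \<gamma> x * h x)"
  by (simp add: smooth_mult smooth_monom)

lemma smooth_poly_fun: "poly_fun f \<Longrightarrow> smooth_fun f"
  unfolding poly_fun_def by (auto intro!: smooth_sum smooth_cmult smooth_monom)

lemma monom_mult: "monom a x * monom c x = monom (\<lambda>i. a i + c i) x"
  unfolding monom_def by (simp add: prod.distrib power_add)

lemma monom_zero: "monom (\<lambda>_. 0) x = 1"
  by (simp add: monom_def)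

lemma monom_split:
  "monom \<alpha> y = complex_of_real (y$i)^(\<alpha> i) * (\<Prod>j\<in>UNIV-{i}. complex_of_real (y$j)^(\<alpha> j))"
  unfolding monom_def by (simp add: prod.remove)

text \<open>The power rule d_i t^alpha = alpha_i t^(alpha - e_i): along the i-th
  coordinate line only the factor t_i^alpha_i varies.\<close>

lemma pdiff_monom: "pdiff i (monom \<alpha>) = (\<lambda>x. of_nat (\<alpha> i) * monom (\<alpha>(i := \<alpha> i - 1)) x)"
proof (rule ext)
  fix x :: "real^'a"
  define C where "C = (\<Prod>j\<in>UNIV-{i}. complex_of_real (x$j)^(\<alpha> j))"
  have C: "(\<Prod>j\<in>UNIV-{i}. complex_of_real ((x + s *\<^sub>R axis i 1)$j)^(\<alpha> j)) = C" for s
    unfolding C_def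
    by (rule prod.cong) (auto simp del: vector_add_component vector_scaleR_component simp add: line_nth)
  have line: "(\<lambda>s. monom \<alpha> (x + s *\<^sub>R axis i 1)) = (\<lambda>s. complex_of_real ((x$i + s)^(\<alpha> i)) * C)"
    by (rule ext) (subst monom_split[of \<alpha> _ i], subst C, simp only: line_nth, simp)
  have "((\<lambda>s. (x$i + s)^(\<alpha> i)) has_real_derivative (of_nat (\<alpha> i) * (x$i + 0)^(\<alpha> i - 1))) (at 0)"
    by (auto intro!: derivative_eq_intros)
  from has_vector_derivative_mult[OF has_vector_derivative_of_real[OF this] has_vector_derivative_const[of C]]
  have "pdiff i (monom \<alpha>) x = complex_of_real (of_nat (\<alpha> i) * (x$i)^(\<alpha> i - 1)) * C"
    unfolding pdiff_def line using vector_derivative_at by fastforce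
  also have "\<dots> = of_nat (\<alpha> i) * monom (\<alpha>(i := \<alpha> i - 1)) x"
    by (simp add: monom_split[of _ x i] C_def)
  finally show "pdiff i (monom \<alpha>) x = of_nat (\<alpha> i) * monom (\<alpha>(i := \<alpha> i - 1)) x" .
qed

lemma pdiff_monom_mult: "smooth_fun h \<Longrightarrow> pdiff i (\<lambda>x. monom \<mu> x * h x) =
   (\<lambda>x. monom \<mu> x * pdiff i h x + of_nat (\<mu> i) * monom (\<mu>(i := \<mu> i - 1)) x * h x)"
  by (simp add: pdiff_mult smooth_linediff smooth_monom pdiff_monom)

section \<open>Symmetry of mixed partial derivatives\<close>

lemma line_deriv:
  assumes "smooth_fun h"
  shows "((\<lambda>\<sigma>. h (y + \<sigma> *\<^sub>R axis a 1)) has_vector_derivative pdiff a h (y + t *\<^sub>R axis a 1)) (at t)"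
proof -
  define z where "z = y + t *\<^sub>R axis a 1"
  have "(\<lambda>s. h (z + s *\<^sub>R axis a 1)) differentiable (at 0)"
    using smooth_linediff[OF assms] unfolding linediff_def by blast
  then have d0: "((\<lambda>s. h (z + s *\<^sub>R axis a 1)) has_vector_derivative pdiff a h z) (at 0)"
    unfolding pdiff_def using vector_derivative_works by blast
  have shift: "((\<lambda>\<sigma>. \<sigma> - t) has_vector_derivative 1) (at t)"
    by (auto intro!: derivative_eq_intros simp: has_real_derivative_iff_has_vector_derivative[symmetric])
  have "(((\<lambda>s. h (z + s *\<^sub>R axis a 1)) \<circ> (\<lambda>\<sigma>. \<sigma> - t)) has_vector_derivative (1 *\<^sub>R pdiff a h z)) (at t)"
    by (rule vector_diff_chain_at[OF shift]) (simp add: d0)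
  moreover have "(\<lambda>s. h (z + s *\<^sub>R axis a 1)) \<circ> (\<lambda>\<sigma>. \<sigma> - t) = (\<lambda>\<sigma>. h (y + \<sigma> *\<^sub>R axis a 1))"
    by (rule ext) (simp add: z_def algebra_simps)
  ultimately show ?thesis by (simp add: z_def)
qed

text \<open>Complex-valued functions have no mean value theorem; we apply the real one
  to the real functional Re (w * _), for an arbitrary weight w.\<close>

lemma re_mvt:
  assumes "0 < s" "\<And>\<sigma>. (f has_vector_derivative f' \<sigma>) (at \<sigma>)"
  shows "\<exists>\<xi>. 0 < \<xi> \<and> \<xi> < s \<and> Re (w * f s) - Re (w * f 0) = s * Re (w * f' \<xi>)"
proof -
  have "DERIV (\<lambda>\<sigma>. Re (w * f \<sigma>)) \<sigma> :> Re (w * f' \<sigma>)" for \<sigma>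
  proof -
    have "((\<lambda>\<sigma>. w * f \<sigma>) has_vector_derivative (w * f' \<sigma> + 0 * f \<sigma>)) (at \<sigma>)"
      by (rule has_vector_derivative_mult[OF has_vector_derivative_const assms(2)])
    then show ?thesis using has_field_derivative_Re by fastforce
  qed
  from MVT2[OF assms(1) this] show ?thesis by auto
qed

lemma re_diff: "Re (w * (a - b)) = Re (w * a) - Re (w * b)"
  by (simp add: right_diff_distrib)

text \<open>The second difference of h over the square of side s spanned by the
  coordinate directions a and b, seen through Re (w * _), equals s^2 times
  d_b d_a h at some interior point of the square: apply the mean value theorem
  first in the a-direction, then in the b-direction.\<close>

lemma second_difference_mvt:
  assumes h: "smooth_fun h" and "0 < s"
  shows "\<exists>\<xi> \<eta>. 0 < \<xi> \<and> \<xi> < s \<and> 0 < \<eta> \<and> \<eta> < s \<and>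
    Re (w * (h (x + s *\<^sub>R axis a 1 + s *\<^sub>R axis b 1) - h (x + s *\<^sub>R axis a 1) -
             h (x + s *\<^sub>R axis b 1) + h x)) =
    s * (s * Re (w * pdiff b (pdiff a h) (x + \<xi> *\<^sub>R axis a 1 + \<eta> *\<^sub>R axis b 1)))"
proof -
  define P where "P \<sigma> \<tau> = x + \<sigma> *\<^sub>R axis a 1 + \<tau> *\<^sub>R axis b 1" for \<sigma> \<tau>
  have da: "((\<lambda>\<sigma>. h (P \<sigma> \<tau>)) has_vector_derivative pdiff a h (P \<sigma>0 \<tau>)) (at \<sigma>0)" for \<sigma>0 \<tau>
  proof -
    have "P \<sigma> \<tau> = (x + \<tau> *\<^sub>R axis b 1) + \<sigma> *\<^sub>R axis a 1" for \<sigma>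
      by (simp add: P_def algebra_simps)
    then show ?thesis using line_deriv[OF h, of "x + \<tau> *\<^sub>R axis b 1" a \<sigma>0] by simp
  qed
  have db: "((\<lambda>\<tau>. pdiff a h (P \<sigma> \<tau>)) has_vector_derivative pdiff b (pdiff a h) (P \<sigma> \<tau>0)) (at \<tau>0)"
    for \<sigma> \<tau>0
    unfolding P_def add.assoc[symmetric] by (rule line_deriv[OF smooth_pdiff[OF h]])
  have "((\<lambda>\<sigma>. h (P \<sigma> s) - h (P \<sigma> 0)) has_vector_derivative
      (pdiff a h (P \<sigma> s) - pdiff a h (P \<sigma> 0))) (at \<sigma>)" for \<sigma>
    by (intro has_vector_derivative_diff da)
  from re_mvt[OF \<open>0 < s\<close> this] obtain \<xi> where \<xi>: "0 < \<xi>" "\<xi> < s" and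
    mvt_a: "Re (w * (h (P s s) - h (P s 0))) - Re (w * (h (P 0 s) - h (P 0 0))) =
      s * Re (w * (pdiff a h (P \<xi> s) - pdiff a h (P \<xi> 0)))"
    by blast
  from re_mvt[OF \<open>0 < s\<close> db] obtain \<eta> where \<eta>: "0 < \<eta>" "\<eta> < s" and
    mvt_b: "Re (w * pdiff a h (P \<xi> s)) - Re (w * pdiff a h (P \<xi> 0)) = s * Re (w * pdiff b (pdiff a h) (P \<xi> \<eta>))"
    by blast
  have "Re (w * (h (x + s *\<^sub>R axis a 1 + s *\<^sub>R axis b 1) - h (x + s *\<^sub>R axis a 1) - h (x + s *\<^sub>R axis b 1) + h x)) =
      Re (w * (h (P s s) - h (P s 0))) - Re (w * (h (P 0 s) - h (P 0 0)))"
    unfolding re_diff[symmetric] by (simp add: P_def algebra_simps)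
  also have "\<dots> = s * Re (w * (pdiff a h (P \<xi> s) - pdiff a h (P \<xi> 0)))"
    by (rule mvt_a)
  also have "\<dots> = s * (s * Re (w * pdiff b (pdiff a h) (P \<xi> \<eta>)))"
    unfolding re_diff mvt_b ..
  finally show ?thesis using \<xi> \<eta> unfolding P_def by blast
qed

lemma dist_axis_shift:
  "dist (x + \<xi> *\<^sub>R axis a 1 + \<eta> *\<^sub>R axis b (1::real)) x \<le> \<bar>\<xi>\<bar> + \<bar>\<eta>\<bar>"
proof -
  have "dist (x + \<xi> *\<^sub>R axis a 1 + \<eta> *\<^sub>R axis b (1::real)) x =
        norm (\<xi> *\<^sub>R axis a (1::real) + \<eta> *\<^sub>R axis b 1)"
    by (simp add: dist_norm)
  also have "\<dots> \<le> norm (\<xi> *\<^sub>R axis a (1::real)) + norm (\<eta> *\<^sub>R axis b (1::real))"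
    by (rule norm_triangle_ineq)
  finally show ?thesis by simp
qed

text \<open>The second difference is symmetric in a and b, so d_b d_a h and d_a d_b h
  take the same value of Re (w * _) at points arbitrarily close to x; by
  continuity of the second derivatives they agree at x.\<close>

lemma mixed_partials_re:
  assumes h: "smooth_fun h"
  shows "Re (w * pdiff b (pdiff a h) x) = Re (w * pdiff a (pdiff b h) x)"
proof (rule ccontr)
  define G1 where "G1 y = Re (w * pdiff b (pdiff a h) y)" for y
  define G2 where "G2 y = Re (w * pdiff a (pdiff b h) y)" for y
  have c1: "continuous_on UNIV G1" and c2: "continuous_on UNIV G2"
    unfolding G1_def G2_def using smooth_cont[OF smooth_pdiff[OF smooth_pdiff[OF h]]]
    by (auto intro!: continuous_intros)
  assume "Re (w * pdiff b (pdiff a h) x) \<noteq> Re (w * pdiff a (pdiff b h) x)"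
  then have ne: "G1 x \<noteq> G2 x" by (simp add: G1_def G2_def)
  define e where "e = \<bar>G1 x - G2 x\<bar> / 2"
  have e: "e > 0" using ne by (simp add: e_def)
  obtain d1 where d1: "d1 > 0" "\<And>y. dist y x < d1 \<Longrightarrow> dist (G1 y) (G1 x) < e"
    using c1 e unfolding continuous_on_iff by blast
  obtain d2 where d2: "d2 > 0" "\<And>y. dist y x < d2 \<Longrightarrow> dist (G2 y) (G2 x) < e"
    using c2 e unfolding continuous_on_iff by blast
  define s where "s = min d1 d2 / 2"
  have s: "s > 0" "s \<le> d1 / 2" "s \<le> d2 / 2" using d1 d2 by (auto simp: s_def)
  have swap: "x + s *\<^sub>R axis b 1 + s *\<^sub>R axis a 1 = x + s *\<^sub>R axis a 1 + s *\<^sub>R axis b 1"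
    by (simp add: algebra_simps)
  obtain \<xi> \<eta> where pts: "0 < \<xi>" "\<xi> < s" "0 < \<eta>" "\<eta> < s"
    and D1: "Re (w * (h (x + s *\<^sub>R axis a 1 + s *\<^sub>R axis b 1) - h (x + s *\<^sub>R axis a 1) -
             h (x + s *\<^sub>R axis b 1) + h x)) = s * (s * G1 (x + \<xi> *\<^sub>R axis a 1 + \<eta> *\<^sub>R axis b 1))"
    using second_difference_mvt[OF h s(1), of w x a b] unfolding G1_def by blast
  obtain \<xi>' \<eta>' where pts': "0 < \<xi>'" "\<xi>' < s" "0 < \<eta>'" "\<eta>' < s"
    and D2: "Re (w * (h (x + s *\<^sub>R axis a 1 + s *\<^sub>R axis b 1) - h (x + s *\<^sub>R axis b 1) -
             h (x + s *\<^sub>R axis a 1) + h x)) = s * (s * G2 (x + \<xi>' *\<^sub>R axis b 1 + \<eta>' *\<^sub>R axis a 1))"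
    using second_difference_mvt[OF h s(1), of w x b a] unfolding G2_def swap by blast
  have eq: "G1 (x + \<xi> *\<^sub>R axis a 1 + \<eta> *\<^sub>R axis b 1) = G2 (x + \<xi>' *\<^sub>R axis b 1 + \<eta>' *\<^sub>R axis a 1)"
    using D1 D2 s(1) by (simp add: algebra_simps)
  have "dist (x + \<xi> *\<^sub>R axis a 1 + \<eta> *\<^sub>R axis b 1) x < d1"
    using dist_axis_shift[of x \<xi> a \<eta> b] pts s by linarith
  then have 1: "dist (G1 (x + \<xi> *\<^sub>R axis a 1 + \<eta> *\<^sub>R axis b 1)) (G1 x) < e" by (rule d1)
  have "dist (x + \<xi>' *\<^sub>R axis b 1 + \<eta>' *\<^sub>R axis a 1) x < d2"
    using dist_axis_shift[of x \<xi>' b \<eta>' a] pts' s by linarith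
  then have 2: "dist (G2 (x + \<xi>' *\<^sub>R axis b 1 + \<eta>' *\<^sub>R axis a 1)) (G2 x) < e" by (rule d2)
  from 1 2 eq show False unfolding e_def dist_real_def by (simp add: abs_if split: if_splits)
qed

text \<open>Schwarz's theorem: partial derivatives of smooth functions commute
  (take w = 1 and w = -i above).\<close>

lemma pdiff_commute:
  assumes h: "smooth_fun h"
  shows "pdiff a (pdiff b h) = pdiff b (pdiff a h)"
proof (rule ext, rule complex_eqI)
  fix x
  show "Re (pdiff a (pdiff b h) x) = Re (pdiff b (pdiff a h) x)"
    using mixed_partials_re[OF h, of 1 b a x] by simp
  show "Im (pdiff a (pdiff b h) x) = Im (pdiff b (pdiff a h) x)"
    using mixed_partials_re[OF h, of "-\<i>" b a x] by simp
qed

lemma pdiffs_move_front: "smooth_fun g \<Longrightarrow> pdiffs (xs @ a # ys) g = pdiffs (a # xs @ ys) g"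
proof (induction xs)
  case (Cons x xs)
  then show ?case
    by (simp add: pdiff_commute smooth_pdiffs)
qed simp

lemma pdiffs_mset: "smooth_fun g \<Longrightarrow> mset L1 = mset L2 \<Longrightarrow> pdiffs L1 g = pdiffs L2 g"
proof (induction L1 arbitrary: L2)
  case (Cons a L1)
  have "a \<in> set L2" using Cons.prems(2) by (metis list.set_intros(1) set_mset_mset)
  then obtain xs ys where L2: "L2 = xs @ a # ys" by (meson split_list)
  have "pdiffs L1 g = pdiffs (xs @ ys) g" using Cons L2 by simp
  then show ?case unfolding L2 by (simp add: pdiffs_move_front[OF Cons.prems(1)])
qed simp

section \<open>Multi-index derivatives and the Leibniz rule\<close>

definition mlist :: "('n::{finite,linorder} \<Rightarrow> nat) \<Rightarrow> 'n list" where
  "mlist \<beta> = concat (map (\<lambda>i. replicate (\<beta> i) i) (sorted_list_of_set (UNIV::'n set)))"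

lemma pdiff_multi_mlist: "pdiff_multi \<beta> g = pdiffs (mlist \<beta>) g"
  by (simp add: pdiff_multi_def mlist_def)

lemma count_mlist: "count (mset (mlist \<beta>)) j = \<beta> j"
proof -
  have "distinct xs \<Longrightarrow> count (mset (concat (map (\<lambda>i. replicate (\<beta> i) i) xs))) j =
      (if j \<in> set xs then \<beta> j else 0)" for xs :: "'a list"
    by (induction xs) auto
  then show ?thesis unfolding mlist_def by simp
qed

lemma mlist_zero: "mlist (\<lambda>_. 0) = []"
proof -
  have "concat (map (\<lambda>i. []) xs) = []" for xs :: "'a list"
    by (induction xs) auto
  then show ?thesis by (simp add: mlist_def)
qed

lemma mlist_Nil_iff: "mlist \<nu> = [] \<longleftrightarrow> \<nu> = (\<lambda>_. 0)"
proof
  assume "mlist \<nu> = []"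
  then have "count (mset (mlist \<nu>)) j = 0" for j by simp
  then show "\<nu> = (\<lambda>_. 0)" by (auto simp: count_mlist fun_eq_iff)
qed (simp add: mlist_zero)

lemma pdiff_multi_zero: "pdiff_multi (\<lambda>_. 0) g = g"
  by (simp add: pdiff_multi_mlist mlist_zero)

lemma pdiff_multi_const: "\<nu> \<noteq> (\<lambda>_. 0) \<Longrightarrow> pdiff_multi \<nu> (\<lambda>x. c) = (\<lambda>x. 0)"
  by (simp add: pdiff_multi_mlist pdiffs_const mlist_Nil_iff)

lemma smooth_pdiff_multi: "smooth_fun g \<Longrightarrow> smooth_fun (pdiff_multi \<beta> g)"
  by (simp add: pdiff_multi_mlist smooth_pdiffs)

text \<open>By symmetry of mixed partials, d^mu d^nu = d^(mu+nu) and d_i d^beta = d^(beta+e_i).\<close>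

lemma pdiff_multi_add: "smooth_fun g \<Longrightarrow>
  pdiff_multi \<mu> (pdiff_multi \<nu> g) = pdiff_multi (\<lambda>i. \<mu> i + \<nu> i) g"
  unfolding pdiff_multi_mlist pdiffs_append[symmetric]
  by (rule pdiffs_mset) (simp_all add: multiset_eq_iff count_mlist)

lemma pdiff_pdiff_multi: "smooth_fun g \<Longrightarrow>
  pdiff i (pdiff_multi \<beta> g) = pdiff_multi (\<beta>(i := Suc (\<beta> i))) g"
  unfolding pdiff_multi_mlist pdiffs_Cons[symmetric]
  by (rule pdiffs_mset) (simp_all add: multiset_eq_iff count_mlist)

lemma pdiffs_sum: "finite S \<Longrightarrow> (\<And>k. k \<in> S \<Longrightarrow> smooth_fun (f k)) \<Longrightarrow>
   pdiffs is (\<lambda>x. \<Sum>k\<in>S. f k x) = (\<lambda>x. \<Sum>k\<in>S. pdiffs is (f k) x)"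
proof (induction S rule: finite_induct)
  case (insert a S)
  have "smooth_fun (\<lambda>x. \<Sum>k\<in>S. f k x)" "smooth_fun (f a)"
    using insert by (auto intro: smooth_sum)
  then have "pdiffs is (\<lambda>x. f a x + (\<Sum>k\<in>S. f k x)) =
      (\<lambda>x. pdiffs is (f a) x + pdiffs is (\<lambda>x. \<Sum>k\<in>S. f k x) x)"
    by (intro pdiffs_add) (simp add: smooth_funD)
  with insert show ?case by simp
qed (simp add: pdiffs_const)

lemma pdiff_multi_sum: "finite S \<Longrightarrow> (\<And>k. k \<in> S \<Longrightarrow> smooth_fun (f k)) \<Longrightarrow>
   pdiff_multi \<beta> (\<lambda>x. \<Sum>k\<in>S. f k x) = (\<lambda>x. \<Sum>k\<in>S. pdiff_multi \<beta> (f k) x)"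
  unfolding pdiff_multi_mlist by (rule pdiffs_sum)

lemma pdiff_multi_cmult:
  "smooth_fun f \<Longrightarrow> pdiff_multi \<beta> (\<lambda>x. c * f x) = (\<lambda>x. c * pdiff_multi \<beta> f x)"
  unfolding pdiff_multi_mlist by (rule pdiffs_cmult) (simp add: smooth_funD)

abbreviation below :: "('n \<Rightarrow> nat) \<Rightarrow> ('n \<Rightarrow> nat) set" where
  "below \<beta> \<equiv> {\<kappa>. \<forall>i. \<kappa> i \<le> \<beta> i}"

lemma finite_below: "finite (below (\<beta> :: 'n::finite \<Rightarrow> nat))"
proof -
  have "below \<beta> = PiE UNIV (\<lambda>i. {..\<beta> i})"
    by (auto simp: PiE_UNIV_domain Pi_def)
  then show ?thesis by (simp add: finite_PiE)
qed

lemma multi_index_induct [case_names zero step]: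
  fixes \<beta> :: "'n::finite \<Rightarrow> nat"
  assumes "P (\<lambda>_. 0)" and "\<And>\<beta> i. P \<beta> \<Longrightarrow> P (\<beta>(i := Suc (\<beta> i)))"
  shows "P \<beta>"
proof (induction "sum \<beta> UNIV" arbitrary: \<beta>)
  case 0
  then have "\<beta> = (\<lambda>_. 0)" by (simp add: fun_eq_iff)
  then show ?case using assms(1) by simp
next
  case (Suc m \<beta>)
  have "\<beta> \<noteq> (\<lambda>_. 0)" using Suc.hyps(2) by auto
  then obtain i where i: "\<beta> i > 0" by (auto simp: fun_eq_iff)
  define \<beta>' where "\<beta>' = \<beta>(i := \<beta> i - 1)"
  have \<beta>: "\<beta> = \<beta>'(i := Suc (\<beta>' i))" using i by (auto simp: \<beta>'_def fun_eq_iff)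
  have "sum \<beta> UNIV = \<beta> i + sum \<beta> (UNIV - {i})" "sum \<beta>' UNIV = \<beta>' i + sum \<beta>' (UNIV - {i})"
    by (simp_all add: sum.remove)
  moreover have "sum \<beta>' (UNIV - {i}) = sum \<beta> (UNIV - {i})"
    by (rule sum.cong) (auto simp: \<beta>'_def)
  ultimately have "m = sum \<beta>' UNIV" using Suc.hyps(2) i by (simp add: \<beta>'_def)
  then have "P \<beta>'" by (rule Suc.hyps(1))
  then show ?case unfolding \<beta> by (rule assms(2))
qed

text \<open>The coefficients of the normal-ordering formula satisfy a Pascal-type
  recursion in beta_i, coming from C(b+1,k) = C(b,k) + C(b,k-1).\<close>

lemma weyl_coef_zero: "\<kappa> i > \<beta> i \<Longrightarrow> weyl_coef \<beta> \<gamma> \<kappa> = 0"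
  unfolding weyl_coef_def by (rule prod_zero) auto

lemma weyl_coef_zero2: "\<kappa> i > \<gamma> i \<Longrightarrow> weyl_coef \<beta> \<gamma> \<kappa> = 0"
  unfolding weyl_coef_def by (rule prod_zero) auto

lemma choose_fact_Suc: "(g choose Suc k) * fact (Suc k) = (g choose k) * fact k * (g - k)"
proof -
  have absorb: "(g choose Suc k) * Suc k = (g choose k) * (g - k)"
    using binomial_absorption[of k g] binomial_absorb_comp[of g k] by (simp add: mult.commute)
  have "(g choose Suc k) * fact (Suc k) = ((g choose Suc k) * Suc k) * fact k"
    by (simp add: fact_Suc algebra_simps)
  also have "\<dots> = (g choose k) * (g - k) * fact k"
    by (simp only: absorb)
  finally show ?thesis by (simp add: ac_simps)
qed

lemma coef_scalar: "((Suc b choose k) * (g choose k) * fact k :: nat) =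
   (b choose k) * (g choose k) * fact k +
   (if 0 < k then (b choose (k - 1)) * (g choose (k - 1)) * fact (k - 1) * (g - (k - 1)) else 0)"
proof (cases k)
  case (Suc k')
  have "(Suc b choose k) * (g choose k) * fact k =
      (b choose k') * ((g choose Suc k') * fact (Suc k')) + (b choose k) * (g choose k) * fact k"
    by (simp add: Suc algebra_simps del: fact_Suc)
  then show ?thesis by (simp only: choose_fact_Suc) (simp add: Suc algebra_simps del: fact_Suc)
qed simp

lemma weyl_coef_Suc:
  fixes \<beta> :: "'n::finite \<Rightarrow> nat"
  shows "weyl_coef (\<beta>(i := Suc (\<beta> i))) \<gamma> \<kappa> = weyl_coef \<beta> \<gamma> \<kappa> +
    (if 0 < \<kappa> i then weyl_coef \<beta> \<gamma> (\<kappa>(i := \<kappa> i - 1)) * of_nat (\<gamma> i - (\<kappa> i - 1)) else 0)"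
proof -
  define C where "C = (\<Prod>j\<in>UNIV-{i}. (of_nat ((\<beta> j choose \<kappa> j) * (\<gamma> j choose \<kappa> j) * fact (\<kappa> j)) :: complex))"
  have split: "weyl_coef b \<gamma> k = of_nat ((b i choose k i) * (\<gamma> i choose k i) * fact (k i)) * C"
    if "\<And>j. j \<noteq> i \<Longrightarrow> b j = \<beta> j" "\<And>j. j \<noteq> i \<Longrightarrow> k j = \<kappa> j" for b k
  proof -
    have "weyl_coef b \<gamma> k = of_nat ((b i choose k i) * (\<gamma> i choose k i) * fact (k i)) *
        (\<Prod>j\<in>UNIV-{i}. (of_nat ((b j choose k j) * (\<gamma> j choose k j) * fact (k j)) :: complex))"
      unfolding weyl_coef_def by (simp add: prod.remove)
    also have "(\<Prod>j\<in>UNIV-{i}. (of_nat ((b j choose k j) * (\<gamma> j choose k j) * fact (k j)) :: complex)) = C"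
      unfolding C_def by (rule prod.cong) (auto simp: that)
    finally show ?thesis .
  qed
  have e1: "weyl_coef (\<beta>(i := Suc (\<beta> i))) \<gamma> \<kappa> =
      of_nat ((Suc (\<beta> i) choose \<kappa> i) * (\<gamma> i choose \<kappa> i) * fact (\<kappa> i)) * C"
    by (subst split) auto
  have e2: "weyl_coef \<beta> \<gamma> \<kappa> = of_nat ((\<beta> i choose \<kappa> i) * (\<gamma> i choose \<kappa> i) * fact (\<kappa> i)) * C"
    by (subst split) auto
  have e3: "weyl_coef \<beta> \<gamma> (\<kappa>(i := \<kappa> i - 1)) =
      of_nat ((\<beta> i choose (\<kappa> i - 1)) * (\<gamma> i choose (\<kappa> i - 1)) * fact (\<kappa> i - 1)) * C"
    by (subst split) auto
  show ?thesis
  proof (cases "0 < \<kappa> i")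
    case True
    then show ?thesis unfolding e1 e2 e3 coef_scalar
      by (simp only: if_True of_nat_add of_nat_mult distrib_right distrib_left ac_simps)
  qed (simp only: e1 e2 e3 coef_scalar if_False add_0_right)
qed

text \<open>Summed against arbitrary terms T, the recursion of weyl_coef_Suc becomes
  the identity that drives the induction step of the Leibniz rule: raising
  beta_i by one either differentiates the h-part (kappa unchanged) or the
  monomial (kappa_i raised by one).\<close>

lemma weyl_coef_sum_Suc:
  fixes \<beta> :: "'n::finite \<Rightarrow> nat" and T :: "('n \<Rightarrow> nat) \<Rightarrow> complex"
  shows "(\<Sum>\<kappa>\<in>below (\<beta>(i := Suc (\<beta> i))). weyl_coef (\<beta>(i := Suc (\<beta> i))) \<gamma> \<kappa> * T \<kappa>) =
         (\<Sum>\<kappa>\<in>below \<beta>. weyl_coef \<beta> \<gamma> \<kappa> * (T \<kappa> + of_nat (\<gamma> i - \<kappa> i) * T (\<kappa>(i := Suc (\<kappa> i)))))"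
proof -
  define K where "K = below (\<beta>(i := Suc (\<beta> i)))"
  define up where "up \<kappa> = \<kappa>(i := Suc (\<kappa> i))" for \<kappa> :: "'n \<Rightarrow> nat"
  have fK: "finite K" unfolding K_def by (rule finite_below)
  have unchanged: "(\<Sum>\<kappa>\<in>K. weyl_coef \<beta> \<gamma> \<kappa> * T \<kappa>) = (\<Sum>\<kappa>\<in>below \<beta>. weyl_coef \<beta> \<gamma> \<kappa> * T \<kappa>)"
  proof (rule sum.mono_neutral_right[OF fK])
    show "below \<beta> \<subseteq> K" unfolding K_def by (auto simp: le_SucI)
    show "\<forall>\<kappa>\<in>K - below \<beta>. weyl_coef \<beta> \<gamma> \<kappa> * T \<kappa> = 0"
      by (auto simp: not_le weyl_coef_zero)
  qed
  have img: "{\<kappa>\<in>K. 0 < \<kappa> i} = up ` below \<beta>"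
  proof
    show "up ` below \<beta> \<subseteq> {\<kappa>\<in>K. 0 < \<kappa> i}" by (auto simp: up_def K_def)
    show "{\<kappa>\<in>K. 0 < \<kappa> i} \<subseteq> up ` below \<beta>"
    proof
      fix \<kappa> assume k: "\<kappa> \<in> {\<kappa>\<in>K. 0 < \<kappa> i}"
      then have "\<kappa> = up (\<kappa>(i := \<kappa> i - 1))" by (auto simp: up_def fun_eq_iff)
      moreover have "(\<kappa>(i := \<kappa> i - 1)) j \<le> \<beta> j" for j
        using k by (cases "j = i") (auto simp: K_def dest: spec[of _ j])
      ultimately show "\<kappa> \<in> up ` below \<beta>" by blast
    qed
  qed
  have inj: "inj_on up (below \<beta>)" by (rule inj_onI) (auto simp: up_def fun_eq_iff split: if_splits)
  have raised: "(\<Sum>\<kappa>\<in>K. (if 0 < \<kappa> i then weyl_coef \<beta> \<gamma> (\<kappa>(i := \<kappa> i - 1)) * of_nat (\<gamma> i - (\<kappa> i - 1)) else 0) * T \<kappa>)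
      = (\<Sum>\<kappa>\<in>below \<beta>. weyl_coef \<beta> \<gamma> \<kappa> * (of_nat (\<gamma> i - \<kappa> i) * T (up \<kappa>)))"
  proof -
    have "(\<Sum>\<kappa>\<in>K. (if 0 < \<kappa> i then weyl_coef \<beta> \<gamma> (\<kappa>(i := \<kappa> i - 1)) * of_nat (\<gamma> i - (\<kappa> i - 1)) else 0) * T \<kappa>)
        = (\<Sum>\<kappa>\<in>{\<kappa>\<in>K. 0 < \<kappa> i}. weyl_coef \<beta> \<gamma> (\<kappa>(i := \<kappa> i - 1)) * of_nat (\<gamma> i - (\<kappa> i - 1)) * T \<kappa>)"
      unfolding sum.inter_filter[OF fK] by (rule sum.cong) auto
    also have "\<dots> = (\<Sum>\<kappa>\<in>below \<beta>. weyl_coef \<beta> \<gamma> ((up \<kappa>)(i := up \<kappa> i - 1)) * of_nat (\<gamma> i - (up \<kappa> i - 1)) * T (up \<kappa>))"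
      unfolding img by (rule sum.reindex[OF inj, unfolded comp_def])
    also have "\<dots> = (\<Sum>\<kappa>\<in>below \<beta>. weyl_coef \<beta> \<gamma> \<kappa> * (of_nat (\<gamma> i - \<kappa> i) * T (up \<kappa>)))"
      by (rule sum.cong) (auto simp: up_def)
    finally show ?thesis .
  qed
  have "(\<Sum>\<kappa>\<in>K. weyl_coef (\<beta>(i := Suc (\<beta> i))) \<gamma> \<kappa> * T \<kappa>) = (\<Sum>\<kappa>\<in>K. weyl_coef \<beta> \<gamma> \<kappa> * T \<kappa>) +
     (\<Sum>\<kappa>\<in>K. (if 0 < \<kappa> i then weyl_coef \<beta> \<gamma> (\<kappa>(i := \<kappa> i - 1)) * of_nat (\<gamma> i - (\<kappa> i - 1)) else 0) * T \<kappa>)"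
    unfolding sum.distrib[symmetric] by (rule sum.cong) (simp_all add: weyl_coef_Suc distrib_right)
  also have "\<dots> = (\<Sum>\<kappa>\<in>below \<beta>. weyl_coef \<beta> \<gamma> \<kappa> * (T \<kappa> + of_nat (\<gamma> i - \<kappa> i) * T (up \<kappa>)))"
    unfolding unchanged raised by (simp add: sum.distrib[symmetric] distrib_left)
  finally show ?thesis unfolding K_def up_def .
qed

text \<open>This is exactly the commutation rule
  encoded in the multiplication weyl_mult of the Weyl algebra.\<close>

lemma leibniz:
  assumes h: "smooth_fun h"
  shows "pdiff_multi \<beta> (\<lambda>x. monom \<gamma> x * h x) =
    (\<lambda>x. \<Sum>\<kappa>\<in>below \<beta>. weyl_coef \<beta> \<gamma> \<kappa> * (monom (\<lambda>i. \<gamma> i - \<kappa> i) x * pdiff_multi (\<lambda>i. \<beta> i - \<kappa> i) h x))"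
proof (induction \<beta> rule: multi_index_induct)
  case zero
  have "below (\<lambda>_::'a. 0::nat) = {\<lambda>_. 0}" by (auto simp: fun_eq_iff)
  then show ?case by (simp add: weyl_coef_def pdiff_multi_zero)
next
  case (step \<beta> i)
  define \<beta>1 where "\<beta>1 = \<beta>(i := Suc (\<beta> i))"
  define T where "T \<kappa> x = monom (\<lambda>j. \<gamma> j - \<kappa> j) x * pdiff_multi (\<lambda>j. \<beta>1 j - \<kappa> j) h x" for \<kappa> x
  have sm_term: "smooth_fun (\<lambda>x. monom \<mu> x * pdiff_multi \<nu> h x)" for \<mu> \<nu>
    by (rule smooth_monom_mult[OF smooth_pdiff_multi[OF h]])
  have term_step: "pdiff i (\<lambda>x. monom (\<lambda>j. \<gamma> j - \<kappa> j) x * pdiff_multi (\<lambda>j. \<beta> j - \<kappa> j) h x) x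
      = T \<kappa> x + of_nat (\<gamma> i - \<kappa> i) * T (\<kappa>(i := Suc (\<kappa> i))) x" if "\<kappa> \<in> below \<beta>" for \<kappa> x
  proof -
    have "(\<lambda>j. \<beta> j - \<kappa> j)(i := Suc (\<beta> i - \<kappa> i)) = (\<lambda>j. \<beta>1 j - \<kappa> j)"
      using that by (auto simp: fun_eq_iff \<beta>1_def Suc_diff_le)
    moreover have "(\<lambda>j. \<gamma> j - \<kappa> j)(i := \<gamma> i - \<kappa> i - 1) = (\<lambda>j. \<gamma> j - (\<kappa>(i := Suc (\<kappa> i))) j)"
      by (auto simp: fun_eq_iff)
    moreover have "(\<lambda>j. \<beta> j - \<kappa> j) = (\<lambda>j. \<beta>1 j - (\<kappa>(i := Suc (\<kappa> i))) j)"
      by (auto simp: fun_eq_iff \<beta>1_def)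
    ultimately show ?thesis
      unfolding pdiff_monom_mult[OF smooth_pdiff_multi[OF h]] pdiff_pdiff_multi[OF h] T_def
      by (simp add: ac_simps)
  qed
  have "pdiff_multi \<beta>1 (\<lambda>x. monom \<gamma> x * h x) = pdiff i (pdiff_multi \<beta> (\<lambda>x. monom \<gamma> x * h x))"
    by (simp add: \<beta>1_def pdiff_pdiff_multi smooth_monom_mult h)
  also have "\<dots> = pdiff i (\<lambda>x. \<Sum>\<kappa>\<in>below \<beta>. weyl_coef \<beta> \<gamma> \<kappa> *
      (monom (\<lambda>j. \<gamma> j - \<kappa> j) x * pdiff_multi (\<lambda>j. \<beta> j - \<kappa> j) h x))"
    by (simp add: step)
  also have "\<dots> = (\<lambda>x. \<Sum>\<kappa>\<in>below \<beta>. weyl_coef \<beta> \<gamma> \<kappa> *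
      pdiff i (\<lambda>x. monom (\<lambda>j. \<gamma> j - \<kappa> j) x * pdiff_multi (\<lambda>j. \<beta> j - \<kappa> j) h x) x)"
    by (simp add: pdiff_sum finite_below linediff_cmult smooth_linediff sm_term
        pdiff_cmult[OF smooth_linediff[OF sm_term]])
  also have "\<dots> = (\<lambda>x. \<Sum>\<kappa>\<in>below \<beta>. weyl_coef \<beta> \<gamma> \<kappa> * (T \<kappa> x + of_nat (\<gamma> i - \<kappa> i) * T (\<kappa>(i := Suc (\<kappa> i))) x))"
    by (rule ext, rule sum.cong) (simp_all add: term_step)
  also have "\<dots> = (\<lambda>x. \<Sum>\<kappa>\<in>below \<beta>1. weyl_coef \<beta>1 \<gamma> \<kappa> * T \<kappa> x)"
    unfolding \<beta>1_def by (rule ext, rule weyl_coef_sum_Suc[symmetric])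
  finally show ?case unfolding \<beta>1_def T_def .
qed

lemma pdiff_multi_monom:
  "pdiff_multi \<beta> (monom \<gamma>) = (\<lambda>x. weyl_coef \<beta> \<gamma> \<beta> * monom (\<lambda>i. \<gamma> i - \<beta> i) x)"
proof -
  have "pdiff_multi \<beta> (monom \<gamma>) = pdiff_multi \<beta> (\<lambda>x. monom \<gamma> x * 1)" by simp
  also have "\<dots> = (\<lambda>x. \<Sum>\<kappa>\<in>below \<beta>. weyl_coef \<beta> \<gamma> \<kappa> *
      (monom (\<lambda>i. \<gamma> i - \<kappa> i) x * pdiff_multi (\<lambda>i. \<beta> i - \<kappa> i) (\<lambda>x. 1) x))"
    by (rule leibniz[OF smooth_const])
  also have "\<dots> = (\<lambda>x. \<Sum>\<kappa>\<in>below \<beta>. if \<kappa> = \<beta> then weyl_coef \<beta> \<gamma> \<beta> * monom (\<lambda>i. \<gamma> i - \<beta> i) x else 0)"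
  proof (rule ext, rule sum.cong[OF refl])
    fix x \<kappa> assume k: "\<kappa> \<in> below \<beta>"
    then have "(\<lambda>i. \<beta> i - \<kappa> i) = (\<lambda>_. 0) \<longleftrightarrow> \<kappa> = \<beta>"
      by (auto simp: fun_eq_iff intro: antisym)
    then show "weyl_coef \<beta> \<gamma> \<kappa> * (monom (\<lambda>i. \<gamma> i - \<kappa> i) x * pdiff_multi (\<lambda>i. \<beta> i - \<kappa> i) (\<lambda>x. 1) x) =
      (if \<kappa> = \<beta> then weyl_coef \<beta> \<gamma> \<beta> * monom (\<lambda>i. \<gamma> i - \<beta> i) x else 0)"
      by (auto simp: pdiff_multi_zero pdiff_multi_const)
  qed
  also have "\<dots> = (\<lambda>x. weyl_coef \<beta> \<gamma> \<beta> * monom (\<lambda>i. \<gamma> i - \<beta> i) x)"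
    by (rule ext) (simp add: finite_below)
  finally show ?thesis .
qed

section \<open>The action of the Weyl algebra\<close>

lemma weyl_act_superset:
  assumes "finite S" "{z. a z \<noteq> 0} \<subseteq> S"
  shows "weyl_act a g x = (\<Sum>z\<in>S. a z * monom (fst z) x * pdiff_multi (snd z) g x)"
  unfolding weyl_act_def case_prod_unfold prod.collapse
  by (rule sum.mono_neutral_left[OF assms]) auto

lemma smooth_weyl_act: "smooth_fun g \<Longrightarrow> smooth_fun (weyl_act a g)"
proof (cases "finite {z. a z \<noteq> 0}")
  case True
  assume g: "smooth_fun g"
  show ?thesis unfolding weyl_act_def case_prod_unfold
    by (intro smooth_sum[OF True] smooth_mult smooth_cmult smooth_monom smooth_pdiff_multi g)
next
  case False
  then show ?thesis unfolding weyl_act_def by (simp add: smooth_const)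
qed

lemma weyl_act_sum_fun:
  assumes "finite S" "\<And>k. k \<in> S \<Longrightarrow> smooth_fun (f k)"
  shows "weyl_act a (\<lambda>x. \<Sum>k\<in>S. f k x) = (\<lambda>x. \<Sum>k\<in>S. weyl_act a (f k) x)"
proof (rule ext)
  fix x
  show "weyl_act a (\<lambda>x. \<Sum>k\<in>S. f k x) x = (\<Sum>k\<in>S. weyl_act a (f k) x)"
    unfolding weyl_act_def case_prod_unfold
    by (simp add: pdiff_multi_sum[OF assms] sum_distrib_left sum.swap[of _ S])
qed

lemma weyl_act_cmult_fun:
  assumes "smooth_fun f"
  shows "weyl_act a (\<lambda>x. c * f x) = (\<lambda>x. c * weyl_act a f x)"
  unfolding weyl_act_def case_prod_unfold pdiff_multi_cmult[OF assms]
  by (simp add: sum_distrib_left ac_simps)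

lemma weyl_act_zero_fun: "weyl_act a (\<lambda>x. 0) = (\<lambda>x. 0)"
  unfolding weyl_act_def case_prod_unfold pdiff_multi_mlist pdiffs_const by simp

lemma weyl_act_sum_elem:
  assumes "finite S" "\<And>k. k \<in> S \<Longrightarrow> weyl_elem (A k)"
  shows "weyl_act (\<lambda>z. \<Sum>k\<in>S. A k z) g = (\<lambda>x. \<Sum>k\<in>S. weyl_act (A k) g x)"
proof (rule ext)
  fix x
  define U where "U = (\<Union>k\<in>S. {z. A k z \<noteq> 0})"
  have fU: "finite U" unfolding U_def using assms by (auto simp: weyl_elem_def)
  have sub: "{z. (\<Sum>k\<in>S. A k z) \<noteq> 0} \<subseteq> U" unfolding U_def
    by (auto elim: sum.not_neutral_contains_not_neutral)
  have "weyl_act (\<lambda>z. \<Sum>k\<in>S. A k z) g x = (\<Sum>z\<in>U. (\<Sum>k\<in>S. A k z) * monom (fst z) x * pdiff_multi (snd z) g x)"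
    by (rule weyl_act_superset[OF fU sub])
  also have "\<dots> = (\<Sum>k\<in>S. \<Sum>z\<in>U. A k z * monom (fst z) x * pdiff_multi (snd z) g x)"
    by (simp add: sum_distrib_right sum.swap[of _ U])
  also have "\<dots> = (\<Sum>k\<in>S. weyl_act (A k) g x)"
    by (rule sum.cong[OF refl], rule weyl_act_superset[symmetric, OF fU]) (auto simp: U_def)
  finally show "weyl_act (\<lambda>z. \<Sum>k\<in>S. A k z) g x = (\<Sum>k\<in>S. weyl_act (A k) g x)" .
qed

lemma weyl_act_diff_elem:
  assumes "weyl_elem A" "weyl_elem B"
  shows "weyl_act (\<lambda>z. A z - B z) g = (\<lambda>x. weyl_act A g x - weyl_act B g x)"
proof (rule ext)
  fix x
  define U where "U = {z. A z \<noteq> 0} \<union> {z. B z \<noteq> 0}"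
  have fU: "finite U" unfolding U_def using assms by (auto simp: weyl_elem_def)
  have "weyl_act (\<lambda>z. A z - B z) g x = (\<Sum>z\<in>U. (A z - B z) * monom (fst z) x * pdiff_multi (snd z) g x)"
    by (rule weyl_act_superset[OF fU]) (auto simp: U_def)
  also have "\<dots> = (\<Sum>z\<in>U. A z * monom (fst z) x * pdiff_multi (snd z) g x) - (\<Sum>z\<in>U. B z * monom (fst z) x * pdiff_multi (snd z) g x)"
    by (simp add: sum_subtractf[symmetric] algebra_simps)
  also have "\<dots> = weyl_act A g x - weyl_act B g x"
    by (subst (1 2) weyl_act_superset[OF fU]) (auto simp: U_def)
  finally show "weyl_act (\<lambda>z. A z - B z) g x = weyl_act A g x - weyl_act B g x" .
qed

text \<open>The terms of the product of b and r: a term of b, a term of r, and a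
  multi-index kappa of the commutation rule.  Each contributes to the
  coefficient of t^(alpha+gamma-kappa) d^(beta+delta-kappa).\<close>

definition mult_terms :: "'n::finite weyl \<Rightarrow> 'n weyl \<Rightarrow>
    (('n \<Rightarrow> nat) \<times> ('n \<Rightarrow> nat) \<times> ('n \<Rightarrow> nat) \<times> ('n \<Rightarrow> nat) \<times> ('n \<Rightarrow> nat)) set" where
  "mult_terms b r = {(\<alpha>, \<beta>, \<gamma>, \<delta>, \<kappa>). b (\<alpha>, \<beta>) \<noteq> 0 \<and> r (\<gamma>, \<delta>) \<noteq> 0 \<and> (\<forall>i. \<kappa> i \<le> \<beta> i \<and> \<kappa> i \<le> \<gamma> i)}"

definition mult_term_act ::
    "'n::{finite,linorder} weyl \<Rightarrow> 'n weyl \<Rightarrow> ((real, 'n) vec \<Rightarrow> complex) \<Rightarrow> (real, 'n) vec \<Rightarrow>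
     ('n \<Rightarrow> nat) \<times> ('n \<Rightarrow> nat) \<times> ('n \<Rightarrow> nat) \<times> ('n \<Rightarrow> nat) \<times> ('n \<Rightarrow> nat) \<Rightarrow> complex" where
  "mult_term_act b r g x = (\<lambda>(\<alpha>, \<beta>, \<gamma>, \<delta>, \<kappa>). b (\<alpha>, \<beta>) * r (\<gamma>, \<delta>) * weyl_coef \<beta> \<gamma> \<kappa> *
      monom (\<lambda>i. \<alpha> i + \<gamma> i - \<kappa> i) x * pdiff_multi (\<lambda>i. \<beta> i + \<delta> i - \<kappa> i) g x)"

lemma mult_terms_Sigma:
  "mult_terms b r = (\<lambda>(z1, z2, \<kappa>). (fst z1, snd z1, fst z2, snd z2, \<kappa>)) `
     (SIGMA z1:{z. b z \<noteq> 0}. SIGMA z2:{z. r z \<noteq> 0}. below (snd z1) \<inter> below (fst z2))"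
  by (force simp: mult_terms_def image_iff)

lemma finite_mult_terms:
  assumes "weyl_elem b" "weyl_elem r"
  shows "finite (mult_terms b r)"
  unfolding mult_terms_Sigma using assms
  by (intro finite_imageI finite_SigmaI) (auto simp: weyl_elem_def finite_below)

text \<open>Acting by a product: group the terms of mult_terms by the monomial they produce.\<close>

lemma weyl_act_mult_expand:
  assumes b: "weyl_elem b" and r: "weyl_elem r"
  shows "weyl_elem (weyl_mult b r) \<and>
    weyl_act (weyl_mult b r) g x = (\<Sum>t\<in>mult_terms b r. mult_term_act b r g x t)"
proof -
  define T where "T = mult_terms b r"
  have fT: "finite T" unfolding T_def using b r by (rule finite_mult_terms)
  define proj where "proj = (\<lambda>(\<alpha>::'a\<Rightarrow>nat, \<beta>::'a\<Rightarrow>nat, \<gamma>::'a\<Rightarrow>nat, \<delta>::'a\<Rightarrow>nat, \<kappa>::'a\<Rightarrow>nat).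
        ((\<lambda>i. \<alpha> i + \<gamma> i - \<kappa> i), (\<lambda>i. \<beta> i + \<delta> i - \<kappa> i)))"
  define w where "w = (\<lambda>(\<alpha>, \<beta>, \<gamma>, \<delta>, \<kappa>). b (\<alpha>, \<beta>) * r (\<gamma>, \<delta>) * weyl_coef \<beta> \<gamma> \<kappa>)"
  have mult_eq: "weyl_mult b r y = (\<Sum>t\<in>{t\<in>T. proj t = y}. w t)" for y
  proof -
    obtain \<mu> \<nu> where y: "y = (\<mu>, \<nu>)" by fastforce
    have "{(\<alpha>, \<beta>, \<gamma>, \<delta>, \<kappa>). b (\<alpha>, \<beta>) \<noteq> 0 \<and> r (\<gamma>, \<delta>) \<noteq> 0 \<and> (\<forall>i. \<kappa> i \<le> \<beta> i \<and> \<kappa> i \<le> \<gamma> i) \<and>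
         \<mu> = (\<lambda>i. \<alpha> i + \<gamma> i - \<kappa> i) \<and> \<nu> = (\<lambda>i. \<beta> i + \<delta> i - \<kappa> i)} = {t\<in>T. proj t = y}"
      by (auto simp: T_def mult_terms_def proj_def y)
    then show ?thesis unfolding weyl_mult_def y w_def by simp
  qed
  have supp: "{y. weyl_mult b r y \<noteq> 0} \<subseteq> proj ` T"
  proof
    fix y assume "y \<in> {y. weyl_mult b r y \<noteq> 0}"
    then have "{t\<in>T. proj t = y} \<noteq> {}" unfolding mult_eq by force
    then show "y \<in> proj ` T" by blast
  qed
  have "weyl_act (weyl_mult b r) g x =
      (\<Sum>y\<in>proj ` T. weyl_mult b r y * monom (fst y) x * pdiff_multi (snd y) g x)"
    by (rule weyl_act_superset[OF _ supp]) (simp add: fT)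
  also have "\<dots> = (\<Sum>y\<in>proj ` T. \<Sum>t\<in>{t\<in>T. proj t = y}. mult_term_act b r g x t)"
    unfolding mult_eq sum_distrib_right
    by (rule sum.cong[OF refl], rule sum.cong) (auto simp: mult_term_act_def w_def proj_def)
  also have "\<dots> = (\<Sum>t\<in>T. mult_term_act b r g x t)"
    by (rule sum.image_gen[symmetric, OF fT])
  finally show ?thesis
    unfolding weyl_elem_def T_def using finite_subset[OF supp] fT by simp
qed

text \<open>Differentiating the result of an action: the Leibniz rule applied term by
  term.  Multi-indices kappa with kappa_i > gamma_i contribute nothing.\<close>

lemma pdiff_multi_weyl_act:
  assumes r: "weyl_elem r" and g: "smooth_fun g"
  shows "pdiff_multi \<beta> (weyl_act r g) x = (\<Sum>z\<in>{z. r z \<noteq> 0}. \<Sum>\<kappa>\<in>below \<beta> \<inter> below (fst z).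
      r z * weyl_coef \<beta> (fst z) \<kappa> * monom (\<lambda>i. fst z i - \<kappa> i) x *
      pdiff_multi (\<lambda>i. \<beta> i + snd z i - \<kappa> i) g x)"
proof -
  define S where "S = {z. r z \<noteq> 0}"
  have fS: "finite S" using r by (simp add: S_def weyl_elem_def)
  have sm: "smooth_fun (\<lambda>y. monom (fst z) y * pdiff_multi (snd z) g y)" for z
    by (rule smooth_monom_mult[OF smooth_pdiff_multi[OF g]])
  have "weyl_act r g = (\<lambda>y. \<Sum>z\<in>S. r z * (monom (fst z) y * pdiff_multi (snd z) g y))"
    by (rule ext) (simp add: weyl_act_superset[OF fS] S_def ac_simps)
  then have "pdiff_multi \<beta> (weyl_act r g) x =
      (\<Sum>z\<in>S. r z * pdiff_multi \<beta> (\<lambda>y. monom (fst z) y * pdiff_multi (snd z) g y) x)"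
    by (simp add: pdiff_multi_sum[OF fS] smooth_cmult sm pdiff_multi_cmult[OF sm])
  also have "\<dots> = (\<Sum>z\<in>S. \<Sum>\<kappa>\<in>below \<beta>. r z * weyl_coef \<beta> (fst z) \<kappa> *
      monom (\<lambda>i. fst z i - \<kappa> i) x * pdiff_multi (\<lambda>i. \<beta> i + snd z i - \<kappa> i) g x)"
  proof (rule sum.cong[OF refl])
    fix z :: "('a \<Rightarrow> nat) \<times> ('a \<Rightarrow> nat)"
    have "(\<lambda>i. \<beta> i - \<kappa> i + snd z i) = (\<lambda>i. \<beta> i + snd z i - \<kappa> i)" if "\<kappa> \<in> below \<beta>" for \<kappa>
      using that by (auto simp: fun_eq_iff)
    then show "r z * pdiff_multi \<beta> (\<lambda>y. monom (fst z) y * pdiff_multi (snd z) g y) x =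
      (\<Sum>\<kappa>\<in>below \<beta>. r z * weyl_coef \<beta> (fst z) \<kappa> *
        monom (\<lambda>i. fst z i - \<kappa> i) x * pdiff_multi (\<lambda>i. \<beta> i + snd z i - \<kappa> i) g x)"
      by (simp add: leibniz[OF smooth_pdiff_multi[OF g]] pdiff_multi_add[OF g] sum_distrib_left ac_simps)
  qed
  also have "\<dots> = (\<Sum>z\<in>S. \<Sum>\<kappa>\<in>below \<beta> \<inter> below (fst z). r z * weyl_coef \<beta> (fst z) \<kappa> *
      monom (\<lambda>i. fst z i - \<kappa> i) x * pdiff_multi (\<lambda>i. \<beta> i + snd z i - \<kappa> i) g x)"
    by (rule sum.cong[OF refl], rule sum.mono_neutral_right)
       (auto simp: finite_below, meson not_le weyl_coef_zero2)
  finally show ?thesis unfolding S_def .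
qed

lemma weyl_act_compose_expand:
  assumes b: "weyl_elem b" and r: "weyl_elem r" and g: "smooth_fun g"
  shows "weyl_act b (weyl_act r g) x = (\<Sum>t\<in>mult_terms b r. mult_term_act b r g x t)"
proof -
  define Sb where "Sb = {z. b z \<noteq> 0}"
  define Sr where "Sr = {z. r z \<noteq> 0}"
  define KK where "KK z1 z2 = below (snd z1) \<inter> below (fst z2)" for z1 z2 :: "('a\<Rightarrow>nat) \<times> ('a\<Rightarrow>nat)"
  define tup :: "(('a\<Rightarrow>nat) \<times> ('a\<Rightarrow>nat)) \<times> (('a\<Rightarrow>nat) \<times> ('a\<Rightarrow>nat)) \<times> ('a\<Rightarrow>nat) \<Rightarrow> _"
    where "tup = (\<lambda>(z1, z2, \<kappa>). (fst z1, snd z1, fst z2, snd z2, \<kappa>))"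
  have fSb: "finite Sb" and fSr: "finite Sr" using b r by (simp_all add: Sb_def Sr_def weyl_elem_def)
  have fKK: "finite (KK z1 z2)" for z1 z2 by (simp add: KK_def finite_below)
  have inj: "inj_on tup (SIGMA z1:Sb. SIGMA z2:Sr. KK z1 z2)"
    by (rule inj_onI) (auto simp: tup_def)
  have "weyl_act b (weyl_act r g) x =
      (\<Sum>z1\<in>Sb. b z1 * monom (fst z1) x * pdiff_multi (snd z1) (weyl_act r g) x)"
    by (rule weyl_act_superset[OF fSb]) (simp add: Sb_def)
  also have "\<dots> = (\<Sum>z1\<in>Sb. \<Sum>z2\<in>Sr. \<Sum>\<kappa>\<in>KK z1 z2. mult_term_act b r g x (tup (z1, z2, \<kappa>)))"
  proof (rule sum.cong[OF refl])
    fix z1 :: "('a\<Rightarrow>nat) \<times> ('a\<Rightarrow>nat)"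
    have term_eq: "b z1 * monom (fst z1) x * (r z2 * weyl_coef (snd z1) (fst z2) \<kappa> *
        monom (\<lambda>i. fst z2 i - \<kappa> i) x * pdiff_multi (\<lambda>i. snd z1 i + snd z2 i - \<kappa> i) g x) =
        mult_term_act b r g x (tup (z1, z2, \<kappa>))" if "\<kappa> \<in> KK z1 z2" for z2 \<kappa>
    proof -
      have "monom (fst z1) x * monom (\<lambda>i. fst z2 i - \<kappa> i) x = monom (\<lambda>i. fst z1 i + fst z2 i - \<kappa> i) x"
        using that unfolding monom_mult by (simp add: KK_def fun_eq_iff)
      moreover have "a * m1 * (r' * c * m2 * d) = a * r' * c * (m1 * m2) * d" for a m1 r' c m2 d :: complex
        by (simp only: ac_simps)
      ultimately show ?thesis by (simp only: mult_term_act_def tup_def split_beta fst_conv snd_conv prod.collapse)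
    qed
    show "b z1 * monom (fst z1) x * pdiff_multi (snd z1) (weyl_act r g) x =
        (\<Sum>z2\<in>Sr. \<Sum>\<kappa>\<in>KK z1 z2. mult_term_act b r g x (tup (z1, z2, \<kappa>)))"
      unfolding pdiff_multi_weyl_act[OF r g] Sr_def[symmetric] KK_def[symmetric] sum_distrib_left
      by (rule sum.cong[OF refl], rule sum.cong[OF refl]) (simp add: term_eq)
  qed
  also have "\<dots> = (\<Sum>t\<in>(SIGMA z1:Sb. SIGMA z2:Sr. KK z1 z2). mult_term_act b r g x (tup t))"
    using fSb fSr fKK by (simp add: sum.Sigma split_def)
  also have "\<dots> = (\<Sum>t\<in>mult_terms b r. mult_term_act b r g x t)"
    unfolding mult_terms_Sigma Sb_def[symmetric] Sr_def[symmetric] KK_def[symmetric] tup_def[symmetric]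
    by (rule sum.reindex[OF inj, symmetric, unfolded comp_def])
  finally show ?thesis .
qed

lemma weyl_act_mult:
  assumes b: "weyl_elem b" and r: "weyl_elem r" and g: "smooth_fun g"
  shows "weyl_act (weyl_mult b r) g = weyl_act b (weyl_act r g)"
proof (rule ext)
  fix x
  show "weyl_act (weyl_mult b r) g x = weyl_act b (weyl_act r g) x"
    using weyl_act_mult_expand[OF b r, of g x] weyl_act_compose_expand[OF b r g, of x] by simp
qed

lemma weyl_elem_mult:
  fixes b r :: "'n::{finite,linorder} weyl"
  assumes "weyl_elem b" "weyl_elem r"
  shows "weyl_elem (weyl_mult b r)"
  using weyl_act_mult_expand[OF assms, of "\<lambda>_. 0" 0] by (rule conjunct1)

section \<open>Functions with vanishing gradient are constant\<close>

lemma zero_pdiff_line: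
  assumes u: "smooth_fun u" and z: "\<And>x. pdiff i u x = 0"
  shows "u (y + t *\<^sub>R axis i 1) = u y"
proof -
  have "\<And>\<sigma>. \<sigma> \<in> UNIV \<Longrightarrow> ((\<lambda>\<sigma>. u (y + \<sigma> *\<^sub>R axis i 1)) has_vector_derivative 0) (at \<sigma> within UNIV)"
    using line_deriv[OF u, of y i] z by simp
  then obtain c where "\<And>\<sigma>. \<sigma> \<in> UNIV \<Longrightarrow> u (y + \<sigma> *\<^sub>R axis i 1) = c"
    using has_vector_derivative_zero_constant[OF convex_UNIV, of "\<lambda>\<sigma>. u (y + \<sigma> *\<^sub>R axis i 1)"] by blast
  from this[of t] this[of 0] show ?thesis by simp
qed

text \<open>Move from y to x one coordinate direction at a time.\<close>

lemma zero_gradient_const: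
  assumes u: "smooth_fun u" and z: "\<And>i x. pdiff i u x = 0"
  shows "u x = u y"
proof -
  have "u (y + (\<Sum>i\<in>F. t i *\<^sub>R axis i 1)) = u y" if "finite F" for F t
    using that
  proof (induction F rule: finite_induct)
    case (insert a F)
    then have "u (y + (\<Sum>i\<in>insert a F. t i *\<^sub>R axis i 1)) =
        u ((y + (\<Sum>i\<in>F. t i *\<^sub>R axis i 1)) + t a *\<^sub>R axis a 1)"
      by (simp add: algebra_simps)
    also have "\<dots> = u (y + (\<Sum>i\<in>F. t i *\<^sub>R axis i 1))"
      by (rule zero_pdiff_line[OF u z])
    finally show ?case using insert by simp
  qed simp
  from this[of UNIV "\<lambda>i. x$i - y$i"]
  have "u (y + (\<Sum>i\<in>UNIV. (x$i - y$i) *\<^sub>R axis i 1)) = u y" by simp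
  moreover have "y + (\<Sum>i\<in>UNIV. (x$i - y$i) *\<^sub>R axis i 1) = x"
    by (simp add: vec_eq_iff axis_def if_distrib cong: if_cong)
  ultimately show ?thesis by simp
qed

section \<open>Operator vectors annihilating a function vector\<close>

definition annihilates ::
    "('m::finite \<Rightarrow> 'n::{finite,linorder} weyl) \<Rightarrow> ('m \<Rightarrow> (real, 'n) vec \<Rightarrow> complex) \<Rightarrow> bool" where
  "annihilates a g \<longleftrightarrow> (\<lambda>x. \<Sum>j\<in>UNIV. weyl_act (a j) (g j) x) = (\<lambda>x. 0)"

lemma ker_kappa_iff: "a \<in> ker_kappa p \<longleftrightarrow> (\<forall>j. weyl_elem (a j)) \<and> annihilates a p"
  by (simp add: ker_kappa_def annihilates_def)

lemma annihilates_cmult: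
  assumes "\<And>j. smooth_fun (g j)" and "annihilates a g"
  shows "annihilates a (\<lambda>j x. c * g j x)"
  using assms unfolding annihilates_def
  by (simp add: weyl_act_cmult_fun fun_eq_iff flip: sum_distrib_left)

text \<open>Step (1) of the proof: the annihilator of a smooth g is a left module,
  so if the generators R_k annihilate g, every element of the module they
  generate does.\<close>

lemma module_annihilates:
  fixes R :: "'r::finite \<Rightarrow> 'm::finite \<Rightarrow> 'n::{finite,linorder} weyl"
  assumes rg: "rows_generate R M"
    and g: "\<And>j. smooth_fun (g j)"
    and sol: "\<And>k. annihilates (R k) g"
    and a: "a \<in> M"
  shows "annihilates a g"
proof -
  have Rel: "\<And>k j. weyl_elem (R k j)" using rg by (simp add: rows_generate_def)
  obtain b where bel: "\<And>k. weyl_elem (b k)" and aeq: "a = (\<lambda>j z. \<Sum>k\<in>UNIV. weyl_mult (b k) (R k j) z)"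
    using a rg unfolding rows_generate_def by blast
  have act: "weyl_act (a j) (g j) = (\<lambda>x. \<Sum>k\<in>UNIV. weyl_act (b k) (weyl_act (R k j) (g j)) x)" for j
    unfolding aeq
    by (subst weyl_act_sum_elem) (simp_all add: weyl_elem_mult bel Rel weyl_act_mult g)
  have "(\<Sum>j\<in>UNIV. weyl_act (a j) (g j) x) = 0" for x
  proof -
    have "(\<Sum>j\<in>UNIV. weyl_act (a j) (g j) x) =
        (\<Sum>k\<in>UNIV. \<Sum>j\<in>UNIV. weyl_act (b k) (weyl_act (R k j) (g j)) x)"
      unfolding act by (rule sum.swap)
    also have "\<dots> = (\<Sum>k\<in>UNIV. weyl_act (b k) (\<lambda>x. \<Sum>j\<in>UNIV. weyl_act (R k j) (g j) x) x)"
      by (subst weyl_act_sum_fun) (auto intro: smooth_weyl_act g)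
    also have "\<dots> = 0"
      using sol unfolding annihilates_def by (simp add: weyl_act_zero_fun)
    finally show ?thesis .
  qed
  then show ?thesis unfolding annihilates_def by auto
qed

definition single :: "(('n \<Rightarrow> nat) \<times> ('n \<Rightarrow> nat)) \<Rightarrow> complex \<Rightarrow> 'n weyl" where
  "single z0 c = (\<lambda>z. if z = z0 then c else 0)"

abbreviation one_w :: "'n weyl" where
  "one_w \<equiv> single ((\<lambda>_. 0), (\<lambda>_. 0)) 1"

lemma weyl_elem_single: "weyl_elem (single z0 c)"
  unfolding weyl_elem_def single_def by (rule finite_subset[of _ "{z0}"]) auto

lemma weyl_elem_zero: "weyl_elem (\<lambda>z. 0)"
  unfolding weyl_elem_def by simp

lemma weyl_elem_diff: "weyl_elem A \<Longrightarrow> weyl_elem B \<Longrightarrow> weyl_elem (\<lambda>z. A z - B z)"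
  unfolding weyl_elem_def by (rule finite_subset[of _ "{z. A z \<noteq> 0} \<union> {z. B z \<noteq> 0}"]) auto

lemma weyl_act_single:
  "weyl_act (single z0 c) f = (\<lambda>x. c * monom (fst z0) x * pdiff_multi (snd z0) f x)"
  by (rule ext, subst weyl_act_superset[of "{z0}"]) (auto simp: single_def)

lemma weyl_act_zero_elem: "weyl_act (\<lambda>z. 0) f = (\<lambda>x. 0)"
  unfolding weyl_act_def by simp

lemma weyl_act_one: "weyl_act one_w f = f"
  by (simp add: weyl_act_single monom_zero pdiff_multi_zero)

text \<open>In the product 1 * a only the term with kappa = 0 of the unit survives.\<close>

lemma weyl_mult_one: "weyl_mult one_w a = a"
proof (rule ext)
  fix y :: "('a \<Rightarrow> nat) \<times> ('a \<Rightarrow> nat)"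
  obtain \<mu> \<nu> where y: "y = (\<mu>, \<nu>)" by fastforce
  have terms: "{(\<alpha>, \<beta>, \<gamma>, \<delta>, \<kappa>). one_w (\<alpha>, \<beta>) \<noteq> 0 \<and> a (\<gamma>, \<delta>) \<noteq> 0 \<and> (\<forall>i. \<kappa> i \<le> \<beta> i \<and> \<kappa> i \<le> \<gamma> i) \<and>
       \<mu> = (\<lambda>i. \<alpha> i + \<gamma> i - \<kappa> i) \<and> \<nu> = (\<lambda>i. \<beta> i + \<delta> i - \<kappa> i)} =
       (if a (\<mu>, \<nu>) \<noteq> 0 then {((\<lambda>_. 0), (\<lambda>_. 0), \<mu>, \<nu>, (\<lambda>_. 0))} else {})"
  proof (intro set_eqI iffI)
    fix t :: "('a\<Rightarrow>nat) \<times> ('a\<Rightarrow>nat) \<times> ('a\<Rightarrow>nat) \<times> ('a\<Rightarrow>nat) \<times> ('a\<Rightarrow>nat)"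
    obtain \<alpha> \<beta> \<gamma> \<delta> \<kappa> where t: "t = (\<alpha>, \<beta>, \<gamma>, \<delta>, \<kappa>)" by (cases t) auto
    assume "t \<in> {(\<alpha>, \<beta>, \<gamma>, \<delta>, \<kappa>). one_w (\<alpha>, \<beta>) \<noteq> 0 \<and> a (\<gamma>, \<delta>) \<noteq> 0 \<and>
       (\<forall>i. \<kappa> i \<le> \<beta> i \<and> \<kappa> i \<le> \<gamma> i) \<and> \<mu> = (\<lambda>i. \<alpha> i + \<gamma> i - \<kappa> i) \<and> \<nu> = (\<lambda>i. \<beta> i + \<delta> i - \<kappa> i)}"
    then have h: "one_w (\<alpha>, \<beta>) \<noteq> 0" "a (\<gamma>, \<delta>) \<noteq> 0" "\<forall>i. \<kappa> i \<le> \<beta> i"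
       "\<mu> = (\<lambda>i. \<alpha> i + \<gamma> i - \<kappa> i)" "\<nu> = (\<lambda>i. \<beta> i + \<delta> i - \<kappa> i)"
      unfolding t by auto
    have "\<alpha> = (\<lambda>_. 0)" "\<beta> = (\<lambda>_. 0)" using h(1) by (auto simp: single_def split: if_splits)
    moreover have "\<kappa> = (\<lambda>_. 0)" using h(3) \<open>\<beta> = (\<lambda>_. 0)\<close> by (auto simp: fun_eq_iff)
    ultimately show "t \<in> (if a (\<mu>, \<nu>) \<noteq> 0 then {((\<lambda>_. 0), (\<lambda>_. 0), \<mu>, \<nu>, (\<lambda>_. 0))} else {})"
      using h(2,4,5) t by simp
  qed (auto simp: single_def split: if_splits)
  show "weyl_mult one_w a y = a y"
    unfolding weyl_mult_def y by (simp only: case_prod_conv terms) (simp add: single_def weyl_coef_def)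
qed

lemma weyl_mult_zero: "weyl_mult (\<lambda>z. 0) a = (\<lambda>z. 0)"
  unfolding weyl_mult_def by (simp add: fun_eq_iff split_beta)

text \<open>Each row R_k is the combination of the rows with coefficients e_k, so it
  lies in the module the rows generate.\<close>

lemma row_in_module:
  fixes R :: "'r::finite \<Rightarrow> 'm::finite \<Rightarrow> 'n::{finite,linorder} weyl"
  assumes rg: "rows_generate R M"
  shows "R k \<in> M"
proof -
  define b :: "'r \<Rightarrow> 'n weyl" where "b = (\<lambda>k'. if k' = k then one_w else (\<lambda>z. 0))"
  have "(\<lambda>j z. \<Sum>k'\<in>UNIV. weyl_mult (b k') (R k' j) z) = R k"
  proof (intro ext)
    fix j z
    have "(\<Sum>k'\<in>UNIV. weyl_mult (b k') (R k' j) z) = (\<Sum>k'\<in>UNIV. if k' = k then R k j z else 0)"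
      by (rule sum.cong) (auto simp: b_def weyl_mult_one weyl_mult_zero)
    then show "(\<Sum>k'\<in>UNIV. weyl_mult (b k') (R k' j) z) = R k j z" by simp
  qed
  moreover have "\<forall>k. weyl_elem (b k)" by (simp add: b_def weyl_elem_single weyl_elem_zero)
  moreover have "M = {a. \<exists>b :: 'r \<Rightarrow> 'n weyl. (\<forall>k. weyl_elem (b k)) \<and>
      a = (\<lambda>j z. \<Sum>k\<in>UNIV. weyl_mult (b k) (R k j) z)}"
    using rg by (simp add: rows_generate_def)
  ultimately show ?thesis by (auto intro!: exI[of _ b])
qed

section \<open>A nonzero polynomial has a nonzero constant derivative\<close>

text \<open>Step (2) of the proof: for a monomial t^alpha0 of maximal total degree in
  f, d^alpha0 kills every other monomial of f (some exponent is too small) and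
  maps t^alpha0 to the nonzero constant prod_i alpha0_i!.\<close>

lemma poly_fun_top_derivative:
  assumes "poly_fun f" and "f \<noteq> (\<lambda>x. 0)"
  obtains \<alpha> L where "L \<noteq> 0" and "pdiff_multi \<alpha> f = (\<lambda>x. L)"
proof -
  obtain cf where fin: "finite {\<alpha>. cf \<alpha> \<noteq> 0}"
    and f: "f = (\<lambda>x. \<Sum>\<alpha>\<in>{\<alpha>. cf \<alpha> \<noteq> 0}. cf \<alpha> * monom \<alpha> x)"
    using assms(1) unfolding poly_fun_def by blast
  define A where "A = {\<alpha>. cf \<alpha> \<noteq> 0}"
  have fA: "finite A" and Ane: "A \<noteq> {}"
    using fin assms(2) f by (auto simp: A_def)
  obtain \<alpha>0 where a0: "\<alpha>0 \<in> A" and amax: "\<And>\<alpha>. \<alpha> \<in> A \<Longrightarrow> sum \<alpha> UNIV \<le> sum \<alpha>0 UNIV"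
    using Max_in[of "(\<lambda>\<alpha>. sum \<alpha> UNIV) ` A"] Max_ge[of "(\<lambda>\<alpha>. sum \<alpha> UNIV) ` A"] fA Ane by fastforce
  define L where "L = cf \<alpha>0 * weyl_coef \<alpha>0 \<alpha>0 \<alpha>0"
  have "weyl_coef \<alpha>0 \<alpha>0 \<alpha>0 \<noteq> 0" unfolding weyl_coef_def by simp
  then have "L \<noteq> 0" using a0 by (simp add: L_def A_def)
  have other: "weyl_coef \<alpha>0 \<alpha> \<alpha>0 = 0" if inA: "\<alpha> \<in> A" and ne: "\<alpha> \<noteq> \<alpha>0" for \<alpha>
  proof -
    have "\<exists>i. \<alpha>0 i > \<alpha> i"
    proof (rule ccontr)
      assume "\<not> (\<exists>i. \<alpha>0 i > \<alpha> i)"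
      then have le: "\<And>i. \<alpha>0 i \<le> \<alpha> i" by (simp add: not_less)
      obtain i where "\<alpha>0 i \<noteq> \<alpha> i" using ne by (metis ext)
      then have "\<alpha>0 i < \<alpha> i" using le[of i] by simp
      then have "sum \<alpha>0 UNIV < sum \<alpha> UNIV"
        by (intro sum_strict_mono_ex1) (auto simp: le)
      then show False using amax[OF inA] by simp
    qed
    then show ?thesis using weyl_coef_zero2 by blast
  qed
  have "pdiff_multi \<alpha>0 f = (\<lambda>x. \<Sum>\<alpha>\<in>A. cf \<alpha> * pdiff_multi \<alpha>0 (monom \<alpha>) x)"
    unfolding f A_def[symmetric]
    by (subst pdiff_multi_sum[OF fA]) (auto intro: smooth_cmult smooth_monom simp: pdiff_multi_cmult[OF smooth_monom])
  also have "\<dots> = (\<lambda>x. \<Sum>\<alpha>\<in>A. if \<alpha> = \<alpha>0 then L else 0)"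
    by (rule ext, rule sum.cong[OF refl]) (auto simp: pdiff_multi_monom other L_def monom_zero)
  also have "\<dots> = (\<lambda>x. L)" using a0 fA by simp
  finally show ?thesis by (rule that[OF \<open>L \<noteq> 0\<close>])
qed

section \<open>Two families of elements of ker(kappa_p)\<close>

definition at_row :: "'m \<Rightarrow> 'n weyl \<Rightarrow> 'm \<Rightarrow> 'n weyl" where
  "at_row j0 X = (\<lambda>j. if j = j0 then X else (\<lambda>z. 0))"

lemma weyl_elem_at_row: "weyl_elem X \<Longrightarrow> weyl_elem (at_row j0 X j)"
  by (simp add: at_row_def weyl_elem_zero)

lemma weyl_act_at_row:
  fixes j0 :: "'m::finite"
  shows "(\<Sum>j\<in>UNIV. weyl_act (at_row j0 X j) (f j) x) = weyl_act X (f j0) x"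
proof -
  have "(\<Sum>j\<in>UNIV. weyl_act (at_row j0 X j) (f j) x) = (\<Sum>j\<in>UNIV. if j = j0 then weyl_act X (f j) x else 0)"
    by (rule sum.cong) (auto simp: at_row_def weyl_act_zero_elem)
  then show ?thesis by simp
qed

definition poly_diff :: "(('n \<Rightarrow> nat) \<Rightarrow> complex) \<Rightarrow> ('n \<Rightarrow> nat) \<Rightarrow> 'n weyl" where
  "poly_diff c \<beta> = (\<lambda>z. if snd z = \<beta> then c (fst z) else 0)"

lemma poly_diff_support: "{z. poly_diff c \<beta> z \<noteq> 0} = (\<lambda>\<alpha>. (\<alpha>, \<beta>)) ` {\<alpha>. c \<alpha> \<noteq> 0}"
  by (auto simp: poly_diff_def)

lemma weyl_elem_poly_diff: "finite {\<alpha>. c \<alpha> \<noteq> 0} \<Longrightarrow> weyl_elem (poly_diff c \<beta>)"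
  by (simp add: weyl_elem_def poly_diff_support)

lemma weyl_act_poly_diff:
  assumes "finite {\<alpha>. c \<alpha> \<noteq> 0}"
  shows "weyl_act (poly_diff c \<beta>) f y = (\<Sum>\<alpha>\<in>{\<alpha>. c \<alpha> \<noteq> 0}. c \<alpha> * monom \<alpha> y) * pdiff_multi \<beta> f y"
proof -
  have inj: "inj_on (\<lambda>\<alpha>. (\<alpha>, \<beta>)) {\<alpha>. c \<alpha> \<noteq> 0}" by (rule inj_onI) auto
  have "weyl_act (poly_diff c \<beta>) f y =
      (\<Sum>z\<in>(\<lambda>\<alpha>. (\<alpha>, \<beta>)) ` {\<alpha>. c \<alpha> \<noteq> 0}. poly_diff c \<beta> z * monom (fst z) y * pdiff_multi (snd z) f y)"
    by (rule weyl_act_superset) (simp_all add: assms poly_diff_support)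
  also have "\<dots> = (\<Sum>\<alpha>\<in>{\<alpha>. c \<alpha> \<noteq> 0}. c \<alpha> * monom \<alpha> y * pdiff_multi \<beta> f y)"
    by (simp add: sum.reindex[OF inj] poly_diff_def)
  finally show ?thesis by (simp add: sum_distrib_right)
qed

text \<open>Step (3), first family: if d^alpha p_j0 is constant, then d_i d^alpha e_j0
  lies in ker(kappa_p); so d^alpha g_j0 has zero gradient for every g
  annihilated by ker(kappa_p), hence is constant.\<close>

lemma derivative_of_solution_constant:
  assumes p: "\<And>j. smooth_fun (p j)" and Dp: "pdiff_multi \<alpha> (p j0) = (\<lambda>x. L)"
    and g: "\<And>j. smooth_fun (g j)" and ker: "\<And>a. a \<in> ker_kappa p \<Longrightarrow> annihilates a g"
  obtains C where "pdiff_multi \<alpha> (g j0) = (\<lambda>x. C)"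
proof -
  have "pdiff i (pdiff_multi \<alpha> (g j0)) x = 0" for i x
  proof -
    define A where "A = at_row j0 (single ((\<lambda>_. 0), \<alpha>(i := Suc (\<alpha> i))) 1)"
    have act: "(\<Sum>j\<in>UNIV. weyl_act (A j) (f j) y) = pdiff i (pdiff_multi \<alpha> (f j0)) y"
      if "smooth_fun (f j0)" for f :: "'a \<Rightarrow> (real, 'b) vec \<Rightarrow> complex" and y
      unfolding A_def weyl_act_at_row weyl_act_single
      by (simp add: monom_zero pdiff_pdiff_multi[OF that])
    have "annihilates A p"
      unfolding annihilates_def by (rule ext) (simp add: act[of p] p Dp pdiff_const)
    then have "A \<in> ker_kappa p"
      by (simp add: ker_kappa_iff A_def weyl_elem_at_row weyl_elem_single)
    then have "annihilates A g" by (rule ker)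
    then have "(\<Sum>j\<in>UNIV. weyl_act (A j) (g j) x) = 0"
      unfolding annihilates_def by (rule fun_cong)
    then show ?thesis by (simp add: act[of g] g)
  qed
  then have "pdiff_multi \<alpha> (g j0) x = pdiff_multi \<alpha> (g j0) 0" for x
    by (rule zero_gradient_const[OF smooth_pdiff_multi[OF g]])
  then show ?thesis by (intro that) (rule ext)
qed

text \<open>Step (3), second family: if d^alpha p_j0 = L \<noteq> 0, then for every j the
  operator vector (p_j / L) d^alpha e_j0 - e_j lies in ker(kappa_p); applied to g
  it gives g_j = (p_j / L) d^alpha g_j0.\<close>

lemma solution_from_derivative:
  assumes p: "poly_fun (p j)" and Dp: "pdiff_multi \<alpha> (p j0) = (\<lambda>x. L)" and "L \<noteq> 0"
    and ker: "\<And>a. a \<in> ker_kappa p \<Longrightarrow> annihilates a g"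
  shows "g j x = p j x * (pdiff_multi \<alpha> (g j0) x / L)"
proof -
  obtain c where fin: "finite {\<alpha>. c \<alpha> \<noteq> 0}" and pj: "p j = (\<lambda>x. \<Sum>\<alpha>\<in>{\<alpha>. c \<alpha> \<noteq> 0}. c \<alpha> * monom \<alpha> x)"
    using p unfolding poly_fun_def by blast
  define P where "P = poly_diff (\<lambda>\<gamma>. c \<gamma> / L) \<alpha>"
  have finP: "finite {\<gamma>. c \<gamma> / L \<noteq> 0}" using fin \<open>L \<noteq> 0\<close> by simp
  have actP: "weyl_act P f y = p j y * (pdiff_multi \<alpha> f y / L)" for f y
    unfolding P_def weyl_act_poly_diff[OF finP] pj using \<open>L \<noteq> 0\<close>
    by (simp add: sum_divide_distrib[symmetric])
  define B where "B = (\<lambda>j' z. at_row j0 P j' z - at_row j one_w j' z)"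
  have "weyl_elem P" unfolding P_def by (rule weyl_elem_poly_diff[OF finP])
  then have elems: "weyl_elem (at_row j0 P j')" "weyl_elem (at_row j one_w j')" for j'
    by (simp_all add: weyl_elem_at_row weyl_elem_single)
  have actB: "(\<Sum>j'\<in>UNIV. weyl_act (B j') (f j') y) = p j y * (pdiff_multi \<alpha> (f j0) y / L) - f j y"
    for f y
    unfolding B_def weyl_act_diff_elem[OF elems] sum_subtractf weyl_act_at_row
    by (simp add: actP weyl_act_one)
  have "\<forall>j'. weyl_elem (B j')"
    unfolding B_def by (intro allI weyl_elem_diff elems)
  moreover have "annihilates B p"
    unfolding annihilates_def by (rule ext) (simp add: actB Dp \<open>L \<noteq> 0\<close>)
  ultimately have "annihilates B g"
    by (intro ker) (simp add: ker_kappa_iff)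
  then have "(\<Sum>j'\<in>UNIV. weyl_act (B j') (g j') x) = 0"
    unfolding annihilates_def by (rule fun_cong)
  then show ?thesis by (simp add: actB)
qed

theorem theorem5p2:
  fixes p :: "'m::finite \<Rightarrow> (real, 'n::{finite,linorder}) vec \<Rightarrow> complex"
    and R :: "'r::finite \<Rightarrow> 'm \<Rightarrow> 'n weyl"
  assumes "\<forall>j. poly_fun (p j)"
    and "p \<noteq> (\<lambda>j x. 0)"
    and "rows_generate R (ker_kappa p)"
  shows "{g :: 'm \<Rightarrow> (real, 'n) vec \<Rightarrow> complex. (\<forall>j. smooth_fun (g j)) \<and>
            (\<forall>k. (\<lambda>x. \<Sum>j\<in>UNIV. weyl_act (R k j) (g j) x) = (\<lambda>x. 0))}
         = {(\<lambda>j x. c * p j x) | c :: complex. True}"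
proof -
  have smooth_p: "\<And>j. smooth_fun (p j)" using assms(1) smooth_poly_fun by blast
  obtain j0 where "p j0 \<noteq> (\<lambda>x. 0)" using assms(2) by auto
  then obtain \<alpha> L where "L \<noteq> 0" and Dp: "pdiff_multi \<alpha> (p j0) = (\<lambda>x. L)"
    using poly_fun_top_derivative assms(1) by blast
  have multiple: "\<exists>c. g = (\<lambda>j x. c * p j x)"
    if g: "\<And>j. smooth_fun (g j)" and sol: "\<And>k. annihilates (R k) g" for g
  proof -
    have ker: "\<And>a. a \<in> ker_kappa p \<Longrightarrow> annihilates a g"
      using module_annihilates[OF assms(3) g sol] .
    obtain C where "pdiff_multi \<alpha> (g j0) = (\<lambda>x. C)"
      using derivative_of_solution_constant[where p = p and g = g, OF smooth_p Dp g ker] .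
    then have "g j x = (C / L) * p j x" for j x
      using solution_from_derivative[where p = p and g = g, OF _ Dp \<open>L \<noteq> 0\<close> ker] assms(1) by simp
    then show ?thesis by blast
  qed
  have "annihilates (R k) p" for k
    using row_in_module[OF assms(3)] by (simp add: ker_kappa_iff)
  then have solution: "annihilates (R k) (\<lambda>j x. c * p j x)" for k c
    by (rule annihilates_cmult[OF smooth_p])
  show ?thesis
    using multiple solution unfolding annihilates_def by (auto intro: smooth_cmult smooth_p)
qed

end
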